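(* Let $k$ be a field of characteristic $p>0$, let $d_1,\ldots,d_n$ be positive integers, let $A = k[x_1,\ldots,x_n]/(x_1^{d_1}, \ldots, x_n^{d_n})$ and $t = \sum_{i = 1}^n (d_i-1)$. If $m\ge 0$ is an integer with $\max(p,d_1, \ldots, d_n)>(t+m)/2$, then for each $i\ge 0$ the map $A_i \to A_{i+m}$ given by $f \mapsto f \cdot (x_1 + \dots + x_n)^m$ has maximal rank.
   Context: $A$ is graded by degree, $A=\bigoplus_{i\ge 0}A_i$, with $A_i$ the image of the homogeneous polynomials of degree $i$. A linear map has maximal rank if it is injective or surjective. *)

theory Defs
  imports "HOL-Library.Poly_Mapping" "HOL-Computational_Algebra.Computational_Algebra"
begin

text \<open>Variables x_1..x_n of the paper
  are x_0..x_(n-1) here.\<close>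

type_synonym 'k mpoly = "(nat \<Rightarrow>\<^sub>0 nat) \<Rightarrow>\<^sub>0 'k"

definition var :: "nat \<Rightarrow> 'k::comm_ring_1 mpoly" where
  "var j = Poly_Mapping.single (Poly_Mapping.single j 1) 1"

definition mon_deg :: "(nat \<Rightarrow>\<^sub>0 nat) \<Rightarrow> nat" where
  "mon_deg a = sum (Poly_Mapping.lookup a) (Poly_Mapping.keys a)"

definition std_mon :: "(nat \<Rightarrow> nat) \<Rightarrow> nat \<Rightarrow> (nat \<Rightarrow>\<^sub>0 nat) \<Rightarrow> bool" where
  "std_mon d n a \<longleftrightarrow> Poly_Mapping.keys a \<subseteq> {..<n} \<and> (\<forall>j<n. Poly_Mapping.lookup a j < d j)"

text \<open>Normal form modulo the monomial ideal (x_j^(d j)): drop non-standard monomials.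
  A is identified with the span of the standard monomials, with product
  reduce (f * g).\<close>
definition reduce :: "(nat \<Rightarrow> nat) \<Rightarrow> nat \<Rightarrow> 'k::comm_ring_1 mpoly \<Rightarrow> 'k mpoly" where
  "reduce d n f = Poly_Mapping.mapp (\<lambda>a c. if std_mon d n a then c else 0) f"

definition graded_piece :: "(nat \<Rightarrow> nat) \<Rightarrow> nat \<Rightarrow> nat \<Rightarrow> 'k::comm_ring_1 mpoly set" where
  "graded_piece d n i = {f. \<forall>a\<in>Poly_Mapping.keys f. std_mon d n a \<and> mon_deg a = i}"

definition lin_form :: "nat \<Rightarrow> 'k::comm_ring_1 mpoly" where
  "lin_form n = (\<Sum>j<n. var j)"

definition mult_map :: "(nat \<Rightarrow> nat) \<Rightarrow> nat \<Rightarrow> nat \<Rightarrow> 'k::comm_ring_1 mpoly \<Rightarrow> 'k mpoly" where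
  "mult_map d n m f = reduce d n (f * lin_form n ^ m)"

definition maximal_rank :: "('a \<Rightarrow> 'b) \<Rightarrow> 'a set \<Rightarrow> 'b set \<Rightarrow> bool" where
  "maximal_rank \<phi> V W \<longleftrightarrow> inj_on \<phi> V \<or> \<phi> ` V = W"

end

theory Submission
  imports Defs "HOL-Number_Theory.Cong"
begin

text \<open>If \<open>2i + m \<le> t\<close> the map is injective, otherwise it is surjective.  Surjectivity
  follows from injectivity in the complementary degree \<open>t - i - m\<close>: multiplication by
  \<open>\<ell>^m\<close> is self-adjoint for the perfect pairing \<open>A\<^sub>j \<times> A\<^sub>t\<^sub>-\<^sub>j \<rightarrow> A\<^sub>t\<close>.

  For injectivity, \<open>i + m < max(p, d\<^sub>1, \<dots>, d\<^sub>n)\<close>.  If \<open>i + m < d\<^sub>j\<close>, the monomial of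
  \<open>f\<close> with the highest power of \<open>x\<^sub>j\<close> survives multiplication by \<open>\<ell>^m\<close>.  If \<open>i + m < p\<close>,
  write \<open>A = A' \<otimes> k[y]/(y^D)\<close> with \<open>y\<close> the last variable and induct on \<open>n\<close>.  Filter \<open>A'\<close>
  by \<open>\<ell>\<close>-stable subspaces, adding one string \<open>w, \<ell>w, \<dots>\<close> at a time.  Modulo the previous
  strings, the part of a kernel element of \<open>(\<ell> + y)^m\<close> along a new string is encoded by a
  polynomial that is divisible by \<open>(1 + x)^m\<close> and has at most \<open>m\<close> nonzero coefficients,
  all in degrees below \<open>p\<close>; such a polynomial vanishes.\<close>

abbreviation "lookup \<equiv> Poly_Mapping.lookup"
abbreviation "keys \<equiv> Poly_Mapping.keys"
abbreviation "single \<equiv> Poly_Mapping.single"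

definition smult_mp :: "'k::comm_ring_1 \<Rightarrow> 'k mpoly \<Rightarrow> 'k mpoly" where
  "smult_mp c f = Poly_Mapping.map ((*) c) f"

lemma lookup_smult_mp [simp]: "lookup (smult_mp c f) a = c * lookup f a"
  unfolding smult_mp_def by transfer (simp add: when_def)

lemma smult_mp_zero [simp]: "smult_mp 0 f = 0"
  by (rule poly_mapping_eqI) simp

lemma smult_mp_one [simp]: "smult_mp 1 f = f"
  by (rule poly_mapping_eqI) simp

lemma smult_mp_zero_right [simp]: "smult_mp c 0 = 0"
  by (rule poly_mapping_eqI) simp

lemma smult_mp_add: "smult_mp c (f + g) = smult_mp c f + smult_mp c g"
  by (rule poly_mapping_eqI) (simp add: lookup_add algebra_simps)

lemma smult_mp_add_left: "smult_mp (a + b) f = smult_mp a f + smult_mp b f"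
  by (rule poly_mapping_eqI) (simp add: lookup_add algebra_simps)

lemma smult_mp_smult_mp [simp]: "smult_mp a (smult_mp b f) = smult_mp (a * b) f"
  by (rule poly_mapping_eqI) (simp add: algebra_simps)

lemma smult_mp_diff: "smult_mp c (f - g) = smult_mp c f - smult_mp c g"
  for c :: "'k::comm_ring_1"
  by (rule poly_mapping_eqI) (simp add: lookup_minus algebra_simps)

lemma smult_mp_minus_one: "smult_mp (-1) f = - f"
  for f :: "'k::comm_ring_1 mpoly"
  by (rule poly_mapping_eqI) simp

lemma smult_mp_mult: "smult_mp c f * g = smult_mp c (f * g)"
  by (simp add: smult_mp_def mult_map_scale_conv_mult mult.assoc)

lemma single_eq_smult_mp: "single a c = smult_mp c (single a 1)"
  by (rule poly_mapping_eqI) (simp add: lookup_single when_def)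

lemma poly_mapping_sum_single: "f = (\<Sum>a\<in>keys f. single a (lookup f a))"
proof (rule poly_mapping_eqI)
  fix k
  have "lookup (\<Sum>a\<in>keys f. single a (lookup f a)) k = (\<Sum>a\<in>keys f. if a = k then lookup f a else 0)"
    by (simp add: lookup_sum lookup_single when_def)
  also have "\<dots> = lookup f k"
    by (simp add: in_keys_iff)
  finally show "lookup f k = lookup (\<Sum>a\<in>keys f. single a (lookup f a)) k" ..
qed

(* The componentwise order on exponent vectors; the built-in order on nat \<Rightarrow>\<^sub>0 nat is
   lexicographic. *)

definition mon_dvd :: "(nat \<Rightarrow>\<^sub>0 nat) \<Rightarrow> (nat \<Rightarrow>\<^sub>0 nat) \<Rightarrow> bool" where
  "mon_dvd a b \<longleftrightarrow> (\<forall>j. lookup a j \<le> lookup b j)"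

lemma eq_add_iff_mon_dvd: "b = a + e \<longleftrightarrow> mon_dvd a b \<and> e = b - a"
  for a b e :: "nat \<Rightarrow>\<^sub>0 nat"
  unfolding mon_dvd_def poly_mapping_eq_iff by (auto simp: fun_eq_iff lookup_add lookup_minus)

lemma mon_dvd_single_iff: "mon_dvd (single j 1) b \<longleftrightarrow> 0 < lookup b j"
  by (auto simp: mon_dvd_def lookup_single when_def)

lemma lookup_single_mult:
  "lookup (single a c * h) b = (if mon_dvd a b then c * lookup h (b - a) else 0)"
  for h :: "'k::comm_ring_1 mpoly"
proof -
  have "single a c * h = (\<Sum>e\<in>keys h. single (a + e) (c * lookup h e))"
    by (subst poly_mapping_sum_single[of h]) (simp add: sum_distrib_left mult_single)
  then have "lookup (single a c * h) b = (\<Sum>e\<in>keys h. if b = a + e then c * lookup h e else 0)"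
    by (simp add: lookup_sum lookup_single when_def eq_commute)
  also have "\<dots> = (\<Sum>e\<in>keys h. if e = b - a then (if mon_dvd a b then c * lookup h e else 0) else 0)"
    by (rule sum.cong) (auto simp: eq_add_iff_mon_dvd)
  also have "\<dots> = (if mon_dvd a b then c * lookup h (b - a) else 0)"
    by (simp add: in_keys_iff)
  finally show ?thesis .
qed

lemma lookup_mult_var:
  "lookup (f * var j) b = (if 0 < lookup b j then lookup f (b - single j 1) else 0)"
  for f :: "'k::comm_ring_1 mpoly"
proof -
  have "f * var j = single (single j 1) 1 * f"
    by (simp add: var_def mult.commute)
  then show ?thesis
    by (simp only: lookup_single_mult mon_dvd_single_iff) simp
qed

lemma lookup_mult_lin_form: "lookup (f * lin_form n) b =
    (\<Sum>j<n. if 0 < lookup b j then lookup f (b - single j 1) else 0)"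
  for f :: "'k::comm_ring_1 mpoly"
  by (simp add: lin_form_def sum_distrib_left lookup_sum lookup_mult_var)

lemma mon_deg_eq_sum: "finite S \<Longrightarrow> keys a \<subseteq> S \<Longrightarrow> mon_deg a = (\<Sum>j\<in>S. lookup a j)"
  unfolding mon_deg_def by (rule sum.mono_neutral_left) (auto simp: in_keys_iff)

lemma mon_deg_add [simp]: "mon_deg (a + b) = mon_deg a + mon_deg b"
  using keys_add[of a b] by (simp add: mon_deg_eq_sum[of "keys a \<union> keys b"] lookup_add sum.distrib)

lemma mon_deg_single [simp]: "mon_deg (single j k) = k"
  by (simp add: mon_deg_def)

lemma mon_deg_eq_Suc_diff_single: "0 < lookup b j \<Longrightarrow> mon_deg b = Suc (mon_deg (b - single j 1))"
  by (metis mon_dvd_single_iff eq_add_iff_mon_dvd mon_deg_add mon_deg_single plus_1_eq_Suc)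

lemma lookup_le_mon_deg: "lookup a j \<le> mon_deg a"
  by (cases "j \<in> keys a") (auto simp: mon_deg_def in_keys_iff intro: member_le_sum)

lemma std_mon_diff: "std_mon d n b \<Longrightarrow> std_mon d n (b - c)"
  unfolding std_mon_def by (auto simp: lookup_minus in_keys_iff subset_iff dest: le_less_trans[rotated])

lemma std_mon_lookup_eq_0: "std_mon d n a \<Longrightarrow> n \<le> j \<Longrightarrow> lookup a j = 0"
  unfolding std_mon_def by (auto simp: in_keys_iff)

lemma std_mon_lookup_le: "std_mon d n a \<Longrightarrow> j < n \<Longrightarrow> lookup a j \<le> d j - 1"
  unfolding std_mon_def by (metis Suc_pred' less_Suc_eq_le gr_implies_not0 not_gr0)

lemma mon_deg_std_mon: "std_mon d n a \<Longrightarrow> mon_deg a = (\<Sum>j<n. lookup a j)"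
  by (rule mon_deg_eq_sum) (auto simp: std_mon_def)

lemma mon_deg_std_mon_le: "std_mon d n a \<Longrightarrow> mon_deg a \<le> (\<Sum>j<n. d j - 1)"
  using sum_mono[of "{..<n}" "lookup a" "\<lambda>j. d j - 1"] std_mon_lookup_le[of d n a]
  by (simp add: mon_deg_std_mon)

lemma finite_std_mon: "finite {a. std_mon d n a}"
proof -
  let ?restr = "\<lambda>a. restrict (lookup a) {..<n}"
  have "inj_on ?restr {a. std_mon d n a}"
  proof (rule inj_onI, rule poly_mapping_eqI)
    fix a b j assume "a \<in> {a. std_mon d n a}" "b \<in> {a. std_mon d n a}" "?restr a = ?restr b"
    then show "lookup a j = lookup b j"
      by (cases "j < n") (auto simp: std_mon_lookup_eq_0 dest: fun_cong[of _ _ j])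
  qed
  moreover have "?restr ` {a. std_mon d n a} \<subseteq> PiE {..<n} (\<lambda>j. {..<d j})"
    by (auto simp: std_mon_def PiE_iff split: if_splits)
  ultimately show ?thesis
    by (rule inj_on_finite) (auto intro: finite_PiE)
qed

lemma lookup_reduce: "lookup (reduce d n f) a = (if std_mon d n a then lookup f a else 0)"
  unfolding reduce_def by (auto simp: lookup_mapp in_keys_iff when_def)

lemma graded_piece_iff:
  "f \<in> graded_piece d n i \<longleftrightarrow> (\<forall>a. lookup f a \<noteq> 0 \<longrightarrow> std_mon d n a \<and> mon_deg a = i)"
  unfolding graded_piece_def by (auto simp: in_keys_iff)

lemma keys_graded_piece:
  "f \<in> graded_piece d n i \<Longrightarrow> keys f \<subseteq> {a. std_mon d n a \<and> mon_deg a = i}"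
  by (auto simp: graded_piece_def)

lemma zero_in_graded_piece [simp]: "0 \<in> graded_piece d n i"
  by (simp add: graded_piece_iff)

lemma graded_piece_add:
  "f \<in> graded_piece d n i \<Longrightarrow> g \<in> graded_piece d n i \<Longrightarrow> f + g \<in> graded_piece d n i"
  unfolding graded_piece_iff lookup_add by (metis add.right_neutral)

lemma graded_piece_diff:
  "f \<in> graded_piece d n i \<Longrightarrow> g \<in> graded_piece d n i \<Longrightarrow> f - g \<in> graded_piece d n i"
  unfolding graded_piece_iff lookup_minus by (metis diff_self)

lemma graded_piece_smult_mp: "f \<in> graded_piece d n i \<Longrightarrow> smult_mp c f \<in> graded_piece d n i"
  by (simp add: graded_piece_iff) (metis mult_zero_right)

lemma single_in_graded_piece:
  "std_mon d n a \<Longrightarrow> mon_deg a = i \<Longrightarrow> single a c \<in> graded_piece d n i"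
  by (auto simp: graded_piece_iff lookup_single when_def)

definition subspace_mp :: "'k::comm_ring_1 mpoly set \<Rightarrow> bool" where
  "subspace_mp V \<longleftrightarrow> 0 \<in> V \<and> (\<forall>x\<in>V. \<forall>y\<in>V. x + y \<in> V) \<and> (\<forall>c. \<forall>x\<in>V. smult_mp c x \<in> V)"

lemma subspace_mp_zero: "subspace_mp V \<Longrightarrow> 0 \<in> V"
  by (simp add: subspace_mp_def)

lemma subspace_mp_add: "subspace_mp V \<Longrightarrow> x \<in> V \<Longrightarrow> y \<in> V \<Longrightarrow> x + y \<in> V"
  by (simp add: subspace_mp_def)

lemma subspace_mp_smult: "subspace_mp V \<Longrightarrow> x \<in> V \<Longrightarrow> smult_mp c x \<in> V"
  by (simp add: subspace_mp_def)

lemma subspace_mp_diff: "subspace_mp V \<Longrightarrow> x \<in> V \<Longrightarrow> y \<in> V \<Longrightarrow> x - y \<in> V"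
  using subspace_mp_add[of V x "smult_mp (-1) y"] subspace_mp_smult[of V y "-1"]
  by (simp add: smult_mp_minus_one)

lemma subspace_mp_sum:
  assumes "subspace_mp V" "finite A" "\<And>a. a \<in> A \<Longrightarrow> f a \<in> V"
  shows "sum f A \<in> V"
  using assms(2,3) by (induction A rule: finite_induct) (auto simp: assms(1) subspace_mp_zero subspace_mp_add)

lemma smult_mp_notin_subspace_mp:
  fixes c :: "'k::field"
  shows "subspace_mp V \<Longrightarrow> smult_mp c x \<in> V \<Longrightarrow> x \<notin> V \<Longrightarrow> c = 0"
  using subspace_mp_smult[of V "smult_mp c x" "inverse c"] by (auto simp: field_simps split: if_splits)

lemma subspace_mp_add_line:
  assumes W: "subspace_mp W"
  shows "subspace_mp {x + smult_mp a v | x a. x \<in> W}"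
  unfolding subspace_mp_def
proof (intro conjI ballI allI)
  show "0 \<in> {x + smult_mp a v | x a. x \<in> W}"
    using subspace_mp_zero[OF W] by (auto intro!: exI[of _ 0])
next
  fix y z assume "y \<in> {x + smult_mp a v | x a. x \<in> W}" "z \<in> {x + smult_mp a v | x a. x \<in> W}"
  then obtain x1 a1 x2 a2 where "y = x1 + smult_mp a1 v" "z = x2 + smult_mp a2 v" "x1 \<in> W" "x2 \<in> W"
    by auto
  then show "y + z \<in> {x + smult_mp a v | x a. x \<in> W}"
    by (auto intro!: exI[of _ "x1 + x2"] exI[of _ "a1 + a2"]
        simp: subspace_mp_add[OF W] smult_mp_add_left algebra_simps)
next
  fix c y assume "y \<in> {x + smult_mp a v | x a. x \<in> W}"
  then obtain x1 a1 where "y = x1 + smult_mp a1 v" "x1 \<in> W"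
    by auto
  then show "smult_mp c y \<in> {x + smult_mp a v | x a. x \<in> W}"
    by (auto intro!: exI[of _ "smult_mp c x1"] exI[of _ "c * a1"] simp: subspace_mp_smult[OF W] smult_mp_add)
qed

lemma subspace_mp_graded_piece: "subspace_mp (graded_piece d n j)"
  by (simp add: subspace_mp_def graded_piece_add graded_piece_smult_mp)

lemma mem_subspace_mp_if_monomials:
  assumes V: "subspace_mp V" and S: "\<And>a. a \<in> S \<Longrightarrow> single a 1 \<in> V" and "keys f \<subseteq> S"
  shows "f \<in> V"
proof -
  have "f = (\<Sum>a\<in>keys f. smult_mp (lookup f a) (single a 1))"
    by (subst poly_mapping_sum_single) (simp add: single_eq_smult_mp[symmetric])
  also have "\<dots> \<in> V"
    using assms by (intro subspace_mp_sum subspace_mp_smult) auto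
  finally show ?thesis .
qed

definition std_mons :: "(nat \<Rightarrow> nat) \<Rightarrow> nat \<Rightarrow> nat \<Rightarrow> 'k::comm_ring_1 mpoly set" where
  "std_mons d n j = (\<lambda>a. single a 1) ` {a. std_mon d n a \<and> mon_deg a = j}"

lemma finite_std_mons: "finite (std_mons d n j)"
  unfolding std_mons_def by (rule finite_imageI) (rule finite_subset[OF _ finite_std_mon]; auto)

lemma std_mons_subset_graded_piece: "std_mons d n j \<subseteq> graded_piece d n j"
  by (auto simp: std_mons_def single_in_graded_piece)

lemma graded_piece_subset_subspace_mp:
  fixes V :: "'k::comm_ring_1 mpoly set"
  assumes V: "subspace_mp V" and mons: "std_mons d n j \<subseteq> V"
  shows "graded_piece d n j \<subseteq> V"
proof
  fix f :: "'k mpoly" assume f: "f \<in> graded_piece d n j"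
  show "f \<in> V"
  proof (rule mem_subspace_mp_if_monomials[OF V])
    show "keys f \<subseteq> {a. std_mon d n a \<and> mon_deg a = j}"
      using f by (rule keys_graded_piece)
    show "single a 1 \<in> V" if "a \<in> {a. std_mon d n a \<and> mon_deg a = j}" for a
      using that mons by (auto simp: std_mons_def)
  qed
qed

lemma lookup_mult_map:
  "lookup (mult_map d n m f) b = (if std_mon d n b then lookup (f * lin_form n ^ m) b else 0)"
  by (simp add: mult_map_def lookup_reduce)

lemma mult_map_add: "mult_map d n m (f + g) = mult_map d n m f + mult_map d n m g"
  by (rule poly_mapping_eqI) (simp add: lookup_mult_map lookup_add distrib_right)

lemma mult_map_smult_mp: "mult_map d n m (smult_mp c f) = smult_mp c (mult_map d n m f)"
  by (rule poly_mapping_eqI) (simp add: lookup_mult_map smult_mp_mult)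

lemma mult_map_zero [simp]: "mult_map d n m 0 = 0"
  by (rule poly_mapping_eqI) (simp add: lookup_mult_map)

lemma mult_map_diff: "mult_map d n m (f - g) = mult_map d n m f - mult_map d n m g"
  for f g :: "'k::comm_ring_1 mpoly"
  using mult_map_add[of d n m "f - g" g] by (simp add: eq_diff_eq)

definition lin_mult :: "(nat \<Rightarrow> nat) \<Rightarrow> nat \<Rightarrow> 'k::comm_ring_1 mpoly \<Rightarrow> 'k mpoly" where
  "lin_mult d n = mult_map d n 1"

lemma lookup_lin_mult: "lookup (lin_mult d n f) b = (if std_mon d n b then
    (\<Sum>j<n. if 0 < lookup b j then lookup f (b - single j 1) else 0) else 0)"
  by (simp add: lin_mult_def lookup_mult_map lookup_mult_lin_form)

text \<open>Reducing before multiplying by the linear form does not matter, as standard monomials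
  are closed under division.\<close>

lemma mult_map_pow_Suc: "mult_map d n (Suc m) f = lin_mult d n (mult_map d n m f)"
  for f :: "'k::comm_ring_1 mpoly"
proof (rule poly_mapping_eqI)
  fix b
  have "lookup (f * lin_form n ^ Suc m) b = lookup ((f * lin_form n ^ m) * lin_form n) b"
    by (simp only: power_Suc mult_ac)
  also have "\<dots> = (\<Sum>j<n. if 0 < lookup b j then lookup (f * lin_form n ^ m) (b - single j 1) else 0)"
    by (rule lookup_mult_lin_form)
  finally show "lookup (mult_map d n (Suc m) f) b = lookup (lin_mult d n (mult_map d n m f)) b"
    by (auto simp: lookup_mult_map lookup_lin_mult std_mon_diff intro!: sum.cong)
qed

lemma mult_map_pow_0: "f \<in> graded_piece d n i \<Longrightarrow> mult_map d n 0 f = f"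
  by (rule poly_mapping_eqI) (auto simp: lookup_mult_map graded_piece_iff)

lemma mult_map_eq_funpow: "f \<in> graded_piece d n i \<Longrightarrow> mult_map d n m f = (lin_mult d n ^^ m) f"
  by (induction m) (auto simp: mult_map_pow_0 mult_map_pow_Suc)

lemma lin_mult_graded_piece:
  assumes f: "f \<in> graded_piece d n i"
  shows "lin_mult d n f \<in> graded_piece d n (Suc i)"
proof (unfold graded_piece_iff, intro allI impI)
  fix b assume nz: "lookup (lin_mult d n f) b \<noteq> 0"
  then have std: "std_mon d n b"
    by (auto simp: lookup_lin_mult split: if_splits)
  with nz obtain j where "j < n" "0 < lookup b j" "lookup f (b - single j 1) \<noteq> 0"
    by (auto simp: lookup_lin_mult elim!: sum.not_neutral_contains_not_neutral split: if_splits)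
  moreover have "mon_deg b = Suc (mon_deg (b - single j 1))"
    by (rule mon_deg_eq_Suc_diff_single) fact
  ultimately show "std_mon d n b \<and> mon_deg b = Suc i"
    using f std by (auto simp: graded_piece_iff)
qed

lemma funpow_lin_mult_graded_piece:
  "f \<in> graded_piece d n i \<Longrightarrow> (lin_mult d n ^^ m) f \<in> graded_piece d n (i + m)"
  by (induction m) (auto simp: lin_mult_graded_piece)

lemma mult_map_graded_piece:
  "f \<in> graded_piece d n i \<Longrightarrow> mult_map d n m f \<in> graded_piece d n (i + m)"
  by (simp add: mult_map_eq_funpow funpow_lin_mult_graded_piece)

section \<open>A vanishing criterion for sparse multiples of powers of 1 + x\<close>

lemma of_nat_eq_of_nat_below_CHAR:
  "(of_nat j :: 'k::comm_ring_1) = of_nat j' \<Longrightarrow> j < CHAR('k) \<Longrightarrow> j' < CHAR('k) \<Longrightarrow> j = j'"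
  by (simp add: of_nat_eq_iff_cong_CHAR cong_less_modulus_unique_nat)

lemma power_dvd_pderiv:
  fixes r :: "'k::field poly"
  assumes "r ^ Suc m dvd g"
  shows "r ^ m dvd pderiv g"
proof -
  from assms obtain h where g: "g = r ^ Suc m * h"
    by auto
  have "pderiv g = r ^ Suc m * pderiv h + h * (smult (of_nat (Suc m)) (r ^ m) * pderiv r)"
    unfolding g by (simp only: pderiv_mult pderiv_power_Suc)
  also have "\<dots> = r ^ m * (smult (of_nat (Suc m)) (pderiv r * h) + r * pderiv h)"
    by (simp only: power_Suc algebra_simps mult_smult_left mult_smult_right)
  finally show ?thesis
    by simp
qed

lemma power_dvd_x_pderiv_minus:
  fixes \<gamma> :: "'k::field poly"
  assumes "[:1,1:] ^ Suc m dvd \<gamma>"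
  shows "[:1,1:] ^ m dvd pCons 0 (pderiv \<gamma>) - smult c \<gamma>"
proof (rule dvd_diff)
  have "pCons 0 (pderiv \<gamma>) = [:0,1:] * pderiv \<gamma>"
    by simp
  then show "[:1,1:] ^ m dvd pCons 0 (pderiv \<gamma>)"
    using power_dvd_pderiv[OF assms] by (metis dvd_mult)
  have "[:1,1::'k:] ^ m dvd [:1,1:] ^ Suc m"
    by (rule le_imp_power_dvd) simp
  then show "[:1,1:] ^ m dvd smult c \<gamma>"
    using assms by (intro dvd_smult) (rule dvd_trans)
qed

text \<open>Induction on \<open>m\<close>: for \<open>j\<^sub>0 \<in> J\<close> the operator \<open>x d/dx - j\<^sub>0\<close> kills \<open>x^j\<^sub>0\<close>, multiplies
  the other monomials of the support by units (their exponents are below the characteristic)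
  and maps multiples of \<open>(1 + x)^(m + 1)\<close> to multiples of \<open>(1 + x)^m\<close>.  So \<open>\<gamma>\<close> is a
  monomial, which vanishes because \<open>-1\<close> is a root.\<close>

lemma sparse_poly_eq_0_if_power_dvd:
  fixes \<gamma> :: "'k::field poly"
  assumes "finite J" "card J \<le> m" "\<forall>j\<in>J. j < CHAR('k)"
    and "\<forall>j. coeff \<gamma> j \<noteq> 0 \<longrightarrow> j \<in> J" and "[:1,1:] ^ m dvd \<gamma>"
  shows "\<gamma> = 0"
  using assms
proof (induction m arbitrary: \<gamma> J)
  case 0
  then show ?case
    by (metis card_0_eq empty_iff leading_coeff_0_iff le_zero_eq)
next
  case (Suc m)
  show ?case
  proof (cases "J = {}")
    case True
    with Suc.prems show ?thesis
      by (metis empty_iff leading_coeff_0_iff)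
  next
    case False
    then obtain j0 where j0: "j0 \<in> J"
      by auto
    define q where "q = pCons 0 (pderiv \<gamma>) - smult (of_nat j0) \<gamma>"
    have coeff_q: "coeff q j = (of_nat j - of_nat j0) * coeff \<gamma> j" for j
      by (cases j) (simp_all add: q_def coeff_pderiv algebra_simps)
    have "[:1,1:] ^ m dvd q"
      unfolding q_def by (rule power_dvd_x_pderiv_minus[OF Suc.prems(5)])
    moreover have "\<forall>j. coeff q j \<noteq> 0 \<longrightarrow> j \<in> J - {j0}"
      using Suc.prems(4) by (auto simp: coeff_q)
    ultimately have "q = 0"
      using Suc.IH[of "J - {j0}" q] Suc.prems(1-3) j0 by auto
    then have "coeff \<gamma> j = 0" if "j \<noteq> j0" for j
      using coeff_q[of j] Suc.prems(3,4) j0 that of_nat_eq_of_nat_below_CHAR[of j j0]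
      by (metis coeff_0 mult_eq_0_iff right_minus_eq)
    then have \<gamma>: "\<gamma> = monom (coeff \<gamma> j0) j0"
      by (intro poly_eqI) auto
    have "poly \<gamma> (-1) = 0"
      using Suc.prems(5) by auto
    then have "coeff \<gamma> j0 = 0"
      by (subst (asm) \<gamma>) (simp add: poly_monom)
    then show ?thesis
      using \<gamma> by simp
  qed
qed

lemma card_string_support_le:
  fixes a m len D :: nat
  assumes "2 * a + m + 2 \<le> len + D \<or> a + m < len"
  shows "card ({r. r < D \<and> a + 1 \<le> r + len \<and> r + len \<le> a + m} \<union> {r. D \<le> r \<and> r \<le> a + m \<and> r < D + m}) \<le> m"
proof -
  let ?S1 = "{r. r < D \<and> a + 1 \<le> r + len \<and> r + len \<le> a + m}"
  let ?S2 = "{r. D \<le> r \<and> r \<le> a + m \<and> r < D + m}"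
  have S1: "card ?S1 = 0 \<or> card ?S1 \<le> m \<and> card ?S1 + len \<le> a + m + 1"
  proof (cases "?S1 = {}")
    case False
    then have "len \<le> a + m"
      by auto
    moreover have "?S1 \<subseteq> {a + 1 - len..a + m - len}" and S1_le: "?S1 \<subseteq> {..a + m - len}"
      by auto
    then have "card ?S1 \<le> card {a + 1 - len..a + m - len}" "card ?S1 \<le> card {..a + m - len}"
      using card_mono[OF finite_atLeastAtMost] card_mono[OF finite_atMost S1_le] by blast+
    ultimately show ?thesis
      by (cases "len \<le> a + 1") auto
  qed simp
  have S2: "card ?S2 = 0 \<or> card ?S2 \<le> m \<and> card ?S2 + D \<le> a + m + 1"
  proof (cases "?S2 = {}")
    case False
    then have "D \<le> a + m"
      by auto
    moreover have S2_lt: "?S2 \<subseteq> {D..<D + m}" and S2_le: "?S2 \<subseteq> {D..a + m}"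
      by auto
    then have "card ?S2 \<le> card {D..<D + m}" "card ?S2 \<le> card {D..a + m}"
      using card_mono[OF finite_atLeastLessThan S2_lt] card_mono[OF finite_atLeastAtMost S2_le]
      by blast+
    ultimately show ?thesis
      by auto
  qed simp
  have "a + m < len \<longrightarrow> card ?S1 = 0"
    by auto
  then have "card ?S1 + card ?S2 \<le> m"
    using S1 S2 assms by linarith
  then show ?thesis
    using card_Un_le[of ?S1 ?S2] by linarith
qed

text \<open>\<open>\<beta>\<close> collects the coefficients of an element along a string of length \<open>len\<close>, and
  \<open>(1 + x)^m \<beta>\<close> those of its product with \<open>(L + y)^m\<close> (see \<open>string_elem\<close> below).  If the product
  vanishes modulo the submodule, only few coefficients of \<open>(1 + x)^m \<beta>\<close> can be nonzero.\<close>

lemma string_poly_eq_0: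
  fixes \<beta> :: "'k::field poly"
  assumes len: "2 * a + m + 2 \<le> len + D \<or> a + m < len" and char: "a + m < CHAR('k)"
    and deg: "degree \<beta> \<le> a" and supp: "\<And>k. coeff \<beta> k \<noteq> 0 \<Longrightarrow> k < D \<and> a - k < len"
    and gap: "\<And>r. r < D \<Longrightarrow> r \<le> a + m \<Longrightarrow> a + m - r < len \<Longrightarrow> coeff ([:1,1:] ^ m * \<beta>) r = 0"
  shows "\<beta> = 0"
proof -
  let ?\<gamma> = "[:1,1:] ^ m * \<beta>"
  let ?S = "{r. r < D \<and> a + 1 \<le> r + len \<and> r + len \<le> a + m} \<union> {r. D \<le> r \<and> r \<le> a + m \<and> r < D + m}"
  have "r \<in> ?S" if r: "coeff ?\<gamma> r \<noteq> 0" for r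
  proof -
    have "coeff ?\<gamma> r = (\<Sum>k\<le>r. coeff \<beta> k * coeff ([:1,1:] ^ m) (r - k))"
      by (simp add: mult.commute[of _ \<beta>] coeff_mult)
    with r obtain k where k: "k \<le> r" "coeff \<beta> k \<noteq> 0" "coeff ([:1,1::'k:] ^ m) (r - k) \<noteq> 0"
      by (metis (no_types, lifting) atMost_iff mult_not_zero sum.neutral)
    then have "r - k \<le> m"
      using le_degree[of "[:1,1::'k:] ^ m" "r - k"] degree_power_le[of "[:1,1::'k:]" m] by simp
    moreover have "k \<le> a"
      using k(2) deg le_degree by fastforce
    ultimately have "r \<le> a + m" "r < D + m" "a + 1 \<le> r + len"
      using k supp[OF k(2)] by linarith+
    moreover have "r + len \<le> a + m" if "r < D"
      using gap[of r] r that \<open>r \<le> a + m\<close> by fastforce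
    ultimately show ?thesis
      by auto
  qed
  moreover have "finite ?S"
    by (rule finite_subset[of _ "{..<D + m}"]) auto
  ultimately have "?\<gamma> = 0"
    using char by (intro sparse_poly_eq_0_if_power_dvd[OF _ card_string_support_le[OF len]]) auto
  then show ?thesis
    by simp
qed

section \<open>Multiplication by \<open>L + y\<close> on \<open>M \<otimes> k[y]/(y^D)\<close>\<close>

text \<open>A homogeneous element of degree \<open>i\<close> of \<open>M \<otimes> k[y]/(y^D)\<close> is represented by its
  coefficient family \<open>g\<close>, where \<open>g k \<in> M (i - k)\<close> is the coefficient of \<open>y^k\<close>.\<close>

locale graded_operator =
  fixes M :: "nat \<Rightarrow> 'k::field mpoly set" and L :: "'k mpoly \<Rightarrow> 'k mpoly"
    and gens :: "nat \<Rightarrow> 'k mpoly set"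
  assumes subspace_M: "subspace_mp (M j)"
    and L_add: "L (x + y) = L x + L y"
    and L_smult: "L (smult_mp c x) = smult_mp c (L x)"
    and L_M: "x \<in> M j \<Longrightarrow> L x \<in> M (Suc j)"
    and finite_gens: "finite (gens j)"
    and gens_subset_M: "gens j \<subseteq> M j"
    and gens_span: "subspace_mp V \<Longrightarrow> gens j \<subseteq> V \<Longrightarrow> M j \<subseteq> V"
begin

lemma L_zero [simp]: "L 0 = 0"
  using L_add[of 0 0] by (metis add_cancel_right_right)

lemma funpow_L_add: "(L ^^ e) (x + y) = (L ^^ e) x + (L ^^ e) y"
  by (induction e) (auto simp: L_add)

lemma funpow_L_smult: "(L ^^ e) (smult_mp c x) = smult_mp c ((L ^^ e) x)"
  by (induction e) (auto simp: L_smult)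

lemma funpow_L_diff: "(L ^^ e) (x - y) = (L ^^ e) x - (L ^^ e) y"
  using funpow_L_add[of e "x - y" y] by (simp add: eq_diff_eq)

lemma funpow_L_M: "x \<in> M j \<Longrightarrow> (L ^^ e) x \<in> M (j + e)"
  by (induction e) (auto simp: L_M)

definition hom_tensor :: "nat \<Rightarrow> nat \<Rightarrow> (nat \<Rightarrow> 'k mpoly) \<Rightarrow> bool" where
  "hom_tensor D i g \<longleftrightarrow>
     (\<forall>k. (k \<le> i \<and> k < D \<longrightarrow> g k \<in> M (i - k)) \<and> (\<not> (k \<le> i \<and> k < D) \<longrightarrow> g k = 0))"

definition tensor_mult :: "nat \<Rightarrow> (nat \<Rightarrow> 'k mpoly) \<Rightarrow> nat \<Rightarrow> 'k mpoly" where
  "tensor_mult D g r = (if r < D then L (g r) + (if r = 0 then 0 else g (r - 1)) else 0)"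

lemma funpow_tensor_mult_add:
  "(tensor_mult D ^^ m) (\<lambda>k. g k + h k) = (\<lambda>k. (tensor_mult D ^^ m) g k + (tensor_mult D ^^ m) h k)"
  by (induction m) (auto simp: tensor_mult_def L_add fun_eq_iff)

definition graded_submodule :: "(nat \<Rightarrow> 'k mpoly set) \<Rightarrow> bool" where
  "graded_submodule W \<longleftrightarrow> (\<forall>j. subspace_mp (W j) \<and> W j \<subseteq> M j \<and> (\<forall>x\<in>W j. L x \<in> W (Suc j)))"

text \<open>For \<open>W = 0\<close> and \<open>c\<close> the socle degree, \<open>inj_mod\<close> is the injectivity half of the theorem.\<close>

definition inj_mod :: "(nat \<Rightarrow> 'k mpoly set) \<Rightarrow> nat \<Rightarrow> nat \<Rightarrow> bool" where
  "inj_mod W c N \<longleftrightarrow> (\<forall>i m g. g \<in> M i \<longrightarrow> 2 * i + m \<le> c \<longrightarrow> i + m \<le> N \<longrightarrow>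
      (L ^^ m) g \<in> W (i + m) \<longrightarrow> g \<in> W i)"

definition tensor_in :: "(nat \<Rightarrow> 'k mpoly set) \<Rightarrow> nat \<Rightarrow> (nat \<Rightarrow> 'k mpoly) \<Rightarrow> bool" where
  "tensor_in W i g \<longleftrightarrow> (\<forall>k\<le>i. g k \<in> W (i - k))"

lemma graded_submodule_subspace: "graded_submodule W \<Longrightarrow> subspace_mp (W j)"
  by (simp add: graded_submodule_def)

lemma graded_submodule_funpow_L:
  "graded_submodule W \<Longrightarrow> x \<in> W j \<Longrightarrow> (L ^^ e) x \<in> W (j + e)"
  by (induction e) (auto simp: graded_submodule_def)

lemma M_subset_if_gens_subset: "graded_submodule W \<Longrightarrow> gens j \<subseteq> W j \<Longrightarrow> M j \<subseteq> W j"
  using gens_span[of "W j" j] by (simp add: graded_submodule_def)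

lemma funpow_tensor_mult_diff:
  "(tensor_mult D ^^ m) (\<lambda>k. g k - h k) r = (tensor_mult D ^^ m) g r - (tensor_mult D ^^ m) h r"
  using fun_cong[OF funpow_tensor_mult_add[of m D "\<lambda>k. g k - h k" h], of r] by simp

lemma tensor_in_diff:
  "graded_submodule W \<Longrightarrow> tensor_in W i g \<Longrightarrow> tensor_in W i h \<Longrightarrow> tensor_in W i (\<lambda>k. g k - h k)"
  by (simp add: tensor_in_def subspace_mp_diff graded_submodule_subspace)

lemma tensor_in_tensor_mult:
  assumes W: "graded_submodule W" and u: "tensor_in W i u" "\<forall>k>i. u k = 0"
  shows "tensor_in W (Suc i) (tensor_mult D u) \<and> (\<forall>k>Suc i. tensor_mult D u k = 0)"
proof
  note sub = graded_submodule_subspace[OF W]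
  show "tensor_in W (Suc i) (tensor_mult D u)"
    unfolding tensor_in_def
  proof (intro allI impI)
    fix k assume k: "k \<le> Suc i"
    have "L (u k) \<in> W (Suc i - k)"
      using u W subspace_mp_zero[OF sub]
      by (cases "k \<le> i") (auto simp: tensor_in_def graded_submodule_def Suc_diff_le)
    moreover have "(if k = 0 then 0 else u (k - 1)) \<in> W (Suc i - k)"
      using u k subspace_mp_zero[OF sub] by (cases k) (auto simp: tensor_in_def)
    ultimately show "tensor_mult D u k \<in> W (Suc i - k)"
      by (simp add: tensor_mult_def subspace_mp_add[OF sub] subspace_mp_zero[OF sub])
  qed
  show "\<forall>k>Suc i. tensor_mult D u k = 0"
    using u by (simp add: tensor_mult_def)
qed

lemma tensor_in_funpow_tensor_mult:
  assumes "graded_submodule W" "tensor_in W i u" "\<forall>k>i. u k = 0"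
  shows "tensor_in W (i + m) ((tensor_mult D ^^ m) u)"
proof -
  have "tensor_in W (i + m) ((tensor_mult D ^^ m) u) \<and> (\<forall>k>i + m. (tensor_mult D ^^ m) u k = 0)"
    by (induction m) (use assms tensor_in_tensor_mult[OF assms(1)] in auto)
  then show ?thesis ..
qed

text \<open>The element \<open>\<Sum>\<^sub>k \<gamma>\<^sub>k y^k \<otimes> L^(e - k) w\<close>; multiplication by \<open>L + y\<close> acts on it as
  multiplication of \<open>\<gamma>\<close> by \<open>1 + x\<close>.\<close>

definition string_elem :: "nat \<Rightarrow> 'k mpoly \<Rightarrow> nat \<Rightarrow> 'k poly \<Rightarrow> nat \<Rightarrow> 'k mpoly" where
  "string_elem D w e \<gamma> = (\<lambda>k. if k < D then smult_mp (coeff \<gamma> k) ((L ^^ (e - k)) w) else 0)"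

lemma tensor_mult_string_elem:
  assumes "degree \<gamma> \<le> e"
  shows "tensor_mult D (string_elem D w e \<gamma>) = string_elem D w (Suc e) ([:1,1:] * \<gamma>)"
proof
  fix r
  have coeff_eq_0: "coeff \<gamma> k = 0" if "e < k" for k
    using assms that by (simp add: coeff_eq_0)
  have "L (smult_mp (coeff \<gamma> r) ((L ^^ (e - r)) w)) = smult_mp (coeff \<gamma> r) ((L ^^ (Suc e - r)) w)"
    by (cases "r \<le> e") (simp_all add: L_smult Suc_diff_le coeff_eq_0)
  moreover have "r \<noteq> 0 \<Longrightarrow> smult_mp (coeff \<gamma> (r - 1)) ((L ^^ (e - (r - 1))) w)
      = smult_mp (coeff \<gamma> (r - 1)) ((L ^^ (Suc e - r)) w)"
    by (cases "r - 1 \<le> e") (simp_all add: coeff_eq_0)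
  ultimately show "tensor_mult D (string_elem D w e \<gamma>) r = string_elem D w (Suc e) ([:1,1:] * \<gamma>) r"
    by (cases r) (simp_all add: tensor_mult_def string_elem_def smult_mp_add_left)
qed

lemma funpow_tensor_mult_string_elem:
  assumes "degree \<gamma> \<le> e"
  shows "(tensor_mult D ^^ m) (string_elem D w e \<gamma>) = string_elem D w (e + m) ([:1,1:] ^ m * \<gamma>)"
proof (induction m)
  case (Suc m)
  have "degree ([:1,1::'k:] ^ m * \<gamma>) \<le> e + m"
    using degree_mult_le[of "[:1,1::'k:] ^ m" \<gamma>] degree_power_le[of "[:1,1::'k:]" m] assms
    by simp
  then show ?case
    by (simp only: funpow.simps comp_apply Suc tensor_mult_string_elem power_Suc mult.assoc
        add_Suc_right)
qed simp

definition add_string :: "(nat \<Rightarrow> 'k mpoly set) \<Rightarrow> nat \<Rightarrow> 'k mpoly \<Rightarrow> nat \<Rightarrow> 'k mpoly set" where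
  "add_string W s w j =
     (if j < s then W j else {x + smult_mp a ((L ^^ (j - s)) w) | x a. x \<in> W j})"

lemma subset_add_string: "W j \<subseteq> add_string W s w j"
  by (auto simp: add_string_def) (metis add.right_neutral smult_mp_zero)

lemma graded_submodule_add_string:
  assumes W: "graded_submodule W" and w: "w \<in> M s"
  shows "graded_submodule (add_string W s w)"
  unfolding graded_submodule_def
proof (intro allI conjI)
  fix j
  note sub = graded_submodule_subspace[OF W]
  show "subspace_mp (add_string W s w j)"
    using subspace_mp_add_line[OF sub] by (simp add: add_string_def sub)
  have "j \<ge> s \<Longrightarrow> (L ^^ (j - s)) w \<in> M j"
    using funpow_L_M[OF w, of "j - s"] by simp
  then show "add_string W s w j \<subseteq> M j"
    using W by (auto simp: add_string_def graded_submodule_def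
        intro!: subspace_mp_add[OF subspace_M] subspace_mp_smult[OF subspace_M])
  show "\<forall>x\<in>add_string W s w j. L x \<in> add_string W s w (Suc j)"
  proof
    fix y assume y: "y \<in> add_string W s w j"
    show "L y \<in> add_string W s w (Suc j)"
    proof (cases "j < s")
      case True
      then have "L y \<in> W (Suc j)"
        using y W by (auto simp: add_string_def graded_submodule_def)
      then show ?thesis
        using subset_add_string by blast
    next
      case False
      then obtain x a where "y = x + smult_mp a ((L ^^ (j - s)) w)" "x \<in> W j"
        using y by (auto simp: add_string_def)
      moreover have "L ((L ^^ (j - s)) w) = (L ^^ (Suc j - s)) w"
        using False by (simp add: Suc_diff_le)
      ultimately show ?thesis
        using False W by (auto simp: add_string_def graded_submodule_def L_add L_smult)
    qed
  qed
qed

lemma inj_mod_add_string: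
  assumes W: "graded_submodule W" and inj: "inj_mod W c N"
    and low: "\<forall>j<s. gens j \<subseteq> W j" and w: "w \<in> M s"
  shows "inj_mod (add_string W s w) c N"
  unfolding inj_mod_def
proof (intro allI impI)
  fix i m g assume g: "g \<in> M i" and im: "2 * i + m \<le> c" "i + m \<le> N"
    and Lg: "(L ^^ m) g \<in> add_string W s w (i + m)"
  show "g \<in> add_string W s w i"
  proof (cases "i < s")
    case True
    then show ?thesis
      using g M_subset_if_gens_subset[OF W] low by (auto simp: add_string_def)
  next
    case False
    then obtain x a where xa: "(L ^^ m) g = x + smult_mp a ((L ^^ (i + m - s)) w)" "x \<in> W (i + m)"
      using Lg by (auto simp: add_string_def)
    let ?v = "(L ^^ (i - s)) w"
    have "(L ^^ m) ?v = (L ^^ (i + m - s)) w"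
      using False by (simp flip: funpow_add[THEN fun_cong, simplified] add: add.commute)
    then have "(L ^^ m) (g - smult_mp a ?v) \<in> W (i + m)"
      using xa by (simp add: funpow_L_diff funpow_L_smult)
    moreover have "g - smult_mp a ?v \<in> M i"
      using g funpow_L_M[OF w, of "i - s"] False
      by (simp add: subspace_mp_diff[OF subspace_M] subspace_mp_smult[OF subspace_M])
    ultimately have "g - smult_mp a ?v \<in> W i"
      using inj im unfolding inj_mod_def by blast
    then show ?thesis
      using False by (auto simp: add_string_def intro!: exI[of _ "g - smult_mp a ?v"] exI[of _ a])
  qed
qed

definition defect :: "nat \<Rightarrow> (nat \<Rightarrow> 'k mpoly set) \<Rightarrow> nat" where
  "defect N W = card {(j, x). j \<le> N \<and> x \<in> gens j \<and> x \<notin> W j}"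

lemma defect_add_string_less:
  assumes W: "graded_submodule W" and "s \<le> N" "w \<in> gens s" "w \<notin> W s"
  shows "defect N (add_string W s w) < defect N W"
proof -
  let ?A = "{(j, x). j \<le> N \<and> x \<in> gens j \<and> x \<notin> add_string W s w j}"
  let ?B = "{(j, x). j \<le> N \<and> x \<in> gens j \<and> x \<notin> W j}"
  have "finite ?B"
    by (rule finite_subset[of _ "Sigma {..N} gens"]) (auto simp: finite_gens)
  moreover have "w \<in> add_string W s w s"
    using subspace_mp_zero[OF graded_submodule_subspace[OF W]]
    by (simp add: add_string_def) (metis add_0 smult_mp_one)
  then have "?A \<subset> ?B"
    using subset_add_string assms by blast
  ultimately show ?thesis
    unfolding defect_def by (rule psubset_card_mono)
qed

definition string_len :: "(nat \<Rightarrow> 'k mpoly set) \<Rightarrow> nat \<Rightarrow> nat \<Rightarrow> 'k mpoly \<Rightarrow> nat" where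
  "string_len W N s w = (LEAST e. N < e \<or> (L ^^ e) w \<in> W (s + e))"

lemma funpow_L_notin_if_less_string_len:
  "e < string_len W N s w \<Longrightarrow> (L ^^ e) w \<notin> W (s + e)"
  unfolding string_len_def using not_less_Least by blast

lemma funpow_L_in_if_string_len_le:
  assumes W: "graded_submodule W" and e: "string_len W N s w \<le> e" "e \<le> N"
  shows "(L ^^ e) w \<in> W (s + e)"
proof -
  let ?len = "string_len W N s w"
  have "N < ?len \<or> (L ^^ ?len) w \<in> W (s + ?len)"
    unfolding string_len_def by (rule LeastI[of _ "Suc N"]) simp
  then have "(L ^^ ?len) w \<in> W (s + ?len)"
    using e by linarith
  then have "(L ^^ (e - ?len)) ((L ^^ ?len) w) \<in> W (s + ?len + (e - ?len))"
    by (rule graded_submodule_funpow_L[OF W])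
  moreover have "(L ^^ (e - ?len)) ((L ^^ ?len) w) = (L ^^ e) w"
    using e by (simp flip: funpow_add[THEN fun_cong, simplified])
  ultimately show ?thesis
    using e by simp
qed

lemma string_len_bound:
  assumes W: "graded_submodule W" and inj: "inj_mod W c N" and w: "w \<in> M s" "w \<notin> W s"
    and i: "s \<le> i" "2 * i + m \<le> c + D - 1" "i + m \<le> N" and D: "1 \<le> D"
  shows "2 * (i - s) + m + 2 \<le> string_len W N s w + D \<or> i - s + m < string_len W N s w"
proof -
  have long: "e < string_len W N s w" if "2 * s + e \<le> c" "s + e \<le> N" for e
  proof (rule ccontr)
    assume "\<not> e < string_len W N s w"
    then have "(L ^^ e) w \<in> W (s + e)"
      using that funpow_L_in_if_string_len_le[OF W, of N s w e] by simp
    then show False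
      using inj w that unfolding inj_mod_def by blast
  qed
  show ?thesis
  proof (cases "2 * s \<le> c \<and> c - 2 * s \<le> N - s")
    case True
    then have "c - 2 * s < string_len W N s w"
      using i by (intro long) linarith+
    then show ?thesis
      using True i D by linarith
  next
    case False
    then have "2 * s \<le> c \<Longrightarrow> N - s < string_len W N s w"
      using i by (intro long) linarith+
    then show ?thesis
      using False i D by linarith
  qed
qed

lemma coeff_eq_0_if_string_elem_in:
  assumes W: "graded_submodule W"
    and r: "r < D" "r \<le> e" "e - r < string_len W N s w"
    and "string_elem D w e \<gamma> r \<in> W (s + e - r)"
  shows "coeff \<gamma> r = 0"
proof (rule smult_mp_notin_subspace_mp[OF graded_submodule_subspace[OF W]])
  show "smult_mp (coeff \<gamma> r) ((L ^^ (e - r)) w) \<in> W (s + e - r)"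
    using assms by (simp add: string_elem_def)
  show "(L ^^ (e - r)) w \<notin> W (s + e - r)"
    using funpow_L_notin_if_less_string_len[OF r(3)] r(2) by simp
qed

lemma add_string_coefficient:
  assumes W: "graded_submodule W" and low: "\<forall>j<s. M j \<subseteq> W j" and i: "s \<le> i" "i \<le> N"
    and g: "hom_tensor D i g" and g_add: "tensor_in (add_string W s w) i g"
  shows "\<exists>a. (a \<noteq> 0 \<longrightarrow> k \<le> i - s \<and> k < D \<and> i - s - k < string_len W N s w) \<and>
    (k \<le> i \<longrightarrow> g k - (if k < D then smult_mp a ((L ^^ (i - s - k)) w) else 0) \<in> W (i - k))"
proof -
  note sub = graded_submodule_subspace[OF W]
  show ?thesis
  proof (cases "k < D \<and> k \<le> i - s")
    case False
    have "g k \<in> W (i - k)" if "k \<le> i"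
    proof (cases "k < D")
      case True
      then have "g k \<in> M (i - k)" "i - k < s"
        using g False that by (auto simp: hom_tensor_def)
      then show ?thesis
        using low by blast
    qed (use g subspace_mp_zero[OF sub] in \<open>auto simp: hom_tensor_def\<close>)
    then show ?thesis
      using False by (intro exI[of _ 0]) auto
  next
    case k: True
    then have "g k \<in> add_string W s w (i - k)" "\<not> i - k < s" "i - k - s = i - s - k"
      using g_add i by (auto simp: tensor_in_def)
    then obtain x a where x: "x \<in> W (i - k)" and gk: "g k = x + smult_mp a ((L ^^ (i - s - k)) w)"
      unfolding add_string_def by auto
    show ?thesis
    proof (cases "i - s - k < string_len W N s w")
      case True
      then show ?thesis
        using k x gk by (intro exI[of _ a]) simp
    next
      case False
      moreover have "s + (i - s - k) = i - k" "i - s - k \<le> N"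
        using k i by auto
      ultimately have "(L ^^ (i - s - k)) w \<in> W (i - k)"
        using funpow_L_in_if_string_len_le[OF W, of N s w "i - s - k"] by simp
      then show ?thesis
        using k x gk by (intro exI[of _ 0]) (simp add: subspace_mp_add[OF sub] subspace_mp_smult[OF sub])
    qed
  qed
qed

lemma add_string_decompose:
  assumes W: "graded_submodule W" and low: "\<forall>j<s. M j \<subseteq> W j" and i: "s \<le> i" "i \<le> N"
    and g: "hom_tensor D i g" and g_add: "tensor_in (add_string W s w) i g"
  obtains \<beta> where "degree \<beta> \<le> i - s"
    and "\<And>k. coeff \<beta> k \<noteq> 0 \<Longrightarrow> k < D \<and> i - s - k < string_len W N s w"
    and "tensor_in W i (\<lambda>k. g k - string_elem D w (i - s) \<beta> k)"
proof -
  from choice[OF allI[OF add_string_coefficient[OF assms]]] obtain a where a: "\<forall>k.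
      (a k \<noteq> 0 \<longrightarrow> k \<le> i - s \<and> k < D \<and> i - s - k < string_len W N s w) \<and>
      (k \<le> i \<longrightarrow> g k - (if k < D then smult_mp (a k) ((L ^^ (i - s - k)) w) else 0) \<in> W (i - k))"
    ..
  define \<beta> where "\<beta> = (\<Sum>k\<le>i - s. monom (a k) k)"
  have coeff_\<beta>: "coeff \<beta> k = a k" for k
    using a by (auto simp: \<beta>_def coeff_sum)
  show ?thesis
  proof
    show "degree \<beta> \<le> i - s"
      using a by (intro degree_le) (auto simp: coeff_\<beta>)
    show "coeff \<beta> k \<noteq> 0 \<Longrightarrow> k < D \<and> i - s - k < string_len W N s w" for k
      using a by (simp add: coeff_\<beta>)
    show "tensor_in W i (\<lambda>k. g k - string_elem D w (i - s) \<beta> k)"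
      unfolding tensor_in_def string_elem_def coeff_\<beta> using a by blast
  qed
qed

lemma lowest_gens_not_subset:
  assumes "\<not> (\<forall>j\<le>N. gens j \<subseteq> W j)"
  obtains s w where "s \<le> N" "w \<in> gens s" "w \<notin> W s" "\<forall>j<s. gens j \<subseteq> W j"
proof -
  define missing where "missing j \<longleftrightarrow> j \<le> N \<and> \<not> gens j \<subseteq> W j" for j
  have "\<exists>j. missing j"
    using assms unfolding missing_def by blast
  then obtain s where "missing s" and "\<forall>j<s. \<not> missing j"
    using exists_least_iff[of missing, THEN iffD1] by blast
  then show ?thesis
    using that unfolding missing_def by (meson less_imp_le order.trans subsetI)
qed

text \<open>Write \<open>g = u + v\<close> with \<open>u\<close> in \<open>W\<close> and \<open>v\<close> on the string of \<open>w\<close>; then \<open>(L + y)^m v\<close> lies in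
  \<open>W\<close>, which forces the coefficient polynomial of \<open>v\<close> to vanish by \<open>string_poly_eq_0\<close>.\<close>

lemma tensor_in_if_tensor_in_add_string:
  assumes W: "graded_submodule W" and inj: "inj_mod W c N" and char: "N < CHAR('k)"
    and D: "1 \<le> D" and low: "\<forall>j<s. M j \<subseteq> W j" and w: "w \<in> M s" "w \<notin> W s"
    and g: "hom_tensor D i g" and i: "s \<le> i" "2 * i + m \<le> c + D - 1" "i + m \<le> N"
    and Tg: "tensor_in W (i + m) ((tensor_mult D ^^ m) g)"
    and g_add: "tensor_in (add_string W s w) i g"
  shows "tensor_in W i g"
proof -
  note sub = graded_submodule_subspace[OF W]
  let ?len = "string_len W N s w"
  have "i \<le> N"
    using i by simp
  then obtain \<beta> where deg: "degree \<beta> \<le> i - s"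
    and supp: "\<And>k. coeff \<beta> k \<noteq> 0 \<Longrightarrow> k < D \<and> i - s - k < ?len"
    and u: "tensor_in W i (\<lambda>k. g k - string_elem D w (i - s) \<beta> k)"
    by (rule add_string_decompose[OF W low i(1) _ g g_add]) blast+
  let ?v = "string_elem D w (i - s) \<beta>"
  let ?u = "\<lambda>k. g k - ?v k"
  have "\<forall>k>i. ?u k = 0"
  proof (intro allI impI)
    fix k assume "i < k"
    moreover from this have "coeff \<beta> k = 0"
      using deg by (simp add: coeff_eq_0)
    ultimately show "?u k = 0"
      using g by (simp add: hom_tensor_def string_elem_def)
  qed
  then have Tu: "tensor_in W (i + m) ((tensor_mult D ^^ m) ?u)"
    by (rule tensor_in_funpow_tensor_mult[OF W u])
  have "(tensor_mult D ^^ m) ?v = (\<lambda>k. (tensor_mult D ^^ m) g k - (tensor_mult D ^^ m) ?u k)"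
    using funpow_tensor_mult_diff[of m D g ?u] by (simp add: fun_eq_iff)
  then have Tv: "tensor_in W (i + m) ((tensor_mult D ^^ m) ?v)"
    using tensor_in_diff[OF W Tg Tu] by simp
  have "\<beta> = 0"
  proof (rule string_poly_eq_0[OF string_len_bound[OF W inj w i D] _ deg supp])
    show "i - s + m < CHAR('k)"
      using char i by linarith
    fix r assume r: "r < D" "r \<le> i - s + m" "i - s + m - r < ?len"
    have "(tensor_mult D ^^ m) ?v r \<in> W (s + (i - s + m) - r)"
      using Tv r i by (simp add: tensor_in_def)
    then show "coeff ([:1,1:] ^ m * \<beta>) r = 0"
      using coeff_eq_0_if_string_elem_in[OF W r] funpow_tensor_mult_string_elem[OF deg] by simp
  qed
  then show ?thesis
    using u by (simp add: string_elem_def cong: if_cong)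
qed

text \<open>Induction on the defect of \<open>W\<close>: enlarge \<open>W\<close> by the string of a generator in the lowest
  degree not yet contained in \<open>W\<close>.\<close>

lemma tensor_in_if_funpow_tensor_mult_in:
  assumes char: "N < CHAR('k)" and D: "1 \<le> D"
  shows "graded_submodule W \<Longrightarrow> inj_mod W c N \<Longrightarrow> hom_tensor D i g \<Longrightarrow>
    2 * i + m \<le> c + D - 1 \<Longrightarrow> i + m \<le> N \<Longrightarrow>
    tensor_in W (i + m) ((tensor_mult D ^^ m) g) \<Longrightarrow> tensor_in W i g"
proof (induction "defect N W" arbitrary: W rule: less_induct)
  case less
  note W = less.prems(1) and g = less.prems(3) and iN = less.prems(5)
  have g_in_if: "g k \<in> W (i - k)" if "M (i - k) \<subseteq> W (i - k)" for k
    using g that subspace_mp_zero[OF graded_submodule_subspace[OF W]]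
    by (cases "k \<le> i \<and> k < D") (auto simp: hom_tensor_def)
  show ?case
  proof (cases "\<forall>j\<le>N. gens j \<subseteq> W j")
    case True
    then show ?thesis
      using iN M_subset_if_gens_subset[OF W] g_in_if by (auto simp: tensor_in_def)
  next
    case False
    then obtain s w where s: "s \<le> N" and w: "w \<in> gens s" "w \<notin> W s"
      and low_gens: "\<forall>j<s. gens j \<subseteq> W j"
      by (rule lowest_gens_not_subset)
    have low: "\<forall>j<s. M j \<subseteq> W j"
      using low_gens M_subset_if_gens_subset[OF W] by blast
    have wM: "w \<in> M s"
      using w gens_subset_M by blast
    have g_add: "tensor_in (add_string W s w) i g"
    proof (rule less.hyps)
      show "defect N (add_string W s w) < defect N W"
        by (rule defect_add_string_less[OF W s w])
      show "graded_submodule (add_string W s w)"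
        by (rule graded_submodule_add_string[OF W wM])
      show "inj_mod (add_string W s w) c N"
        by (rule inj_mod_add_string[OF W less.prems(2) low_gens wM])
      show "tensor_in (add_string W s w) (i + m) ((tensor_mult D ^^ m) g)"
        using less.prems(6) subset_add_string unfolding tensor_in_def by blast
    qed (use less.prems in auto)
    show ?thesis
    proof (cases "s \<le> i")
      case True
      show ?thesis
        by (rule tensor_in_if_tensor_in_add_string[OF W less.prems(2) char D low wM w(2) g True
            less.prems(4-6) g_add])
    next
      case False
      then show ?thesis
        using low g_in_if by (auto simp: tensor_in_def)
    qed
  qed
qed

end

section \<open>Injectivity below the characteristic\<close>

lemma graded_operator_lin_mult:
  "graded_operator (graded_piece d n) (lin_mult d n) (std_mons d n :: nat \<Rightarrow> 'k::field mpoly set)"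
proof
  show "lin_mult d n (x + y) = lin_mult d n x + lin_mult d n y" for x y :: "'k mpoly"
    by (simp add: lin_mult_def mult_map_add)
  show "lin_mult d n (smult_mp c x) = smult_mp c (lin_mult d n x)" for c and x :: "'k mpoly"
    by (simp add: lin_mult_def mult_map_smult_mp)
qed (simp_all add: subspace_mp_graded_piece lin_mult_graded_piece finite_std_mons
    std_mons_subset_graded_piece graded_piece_subset_subspace_mp)

text \<open>Splitting off the last variable, \<open>k[x\<^sub>0, \<dots>, x\<^sub>n]/(x\<^sub>j^d\<^sub>j) = A' \<otimes> k[x\<^sub>n]/(x\<^sub>n^d\<^sub>n)\<close>;
  \<open>var_coeff n k f\<close> is the coefficient of \<open>x\<^sub>n^k\<close> in \<open>f\<close>.\<close>

definition var_coeff :: "nat \<Rightarrow> nat \<Rightarrow> 'k::comm_ring_1 mpoly \<Rightarrow> 'k mpoly" where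
  "var_coeff n k f = Abs_poly_mapping (\<lambda>b. if lookup b n = 0 then lookup f (b + single n k) else 0)"

lemma lookup_var_coeff:
  "lookup (var_coeff n k f) b = (if lookup b n = 0 then lookup f (b + single n k) else 0)"
proof -
  have "{b. (if lookup b n = 0 then lookup f (b + single n k) else 0) \<noteq> 0}
      \<subseteq> (\<lambda>a. a - single n k) ` keys f"
    by (auto simp: in_keys_iff split: if_splits intro!: image_eqI[of _ _ "_ + single n k"])
  then have "finite {b. (if lookup b n = 0 then lookup f (b + single n k) else 0) \<noteq> 0}"
    by (rule finite_subset) simp
  then show ?thesis
    unfolding var_coeff_def by simp
qed

lemma lookup_add_single: "lookup (b + single n r) j = lookup b j + (if j = n then r else 0)"
  by (simp add: lookup_add lookup_single when_def)

lemma std_mon_Suc_add_single: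
  assumes "lookup b n = 0"
  shows "std_mon d (Suc n) (b + single n r) \<longleftrightarrow> std_mon d n b \<and> r < d n"
proof -
  have "j \<in> keys (b + single n r) \<longleftrightarrow> j \<in> keys b \<or> j = n \<and> r \<noteq> 0" for j
    using assms by (auto simp: in_keys_iff lookup_add_single)
  moreover have "n \<notin> keys b"
    using assms by (simp add: in_keys_iff)
  ultimately have "keys (b + single n r) \<subseteq> {..<Suc n} \<longleftrightarrow> keys b \<subseteq> {..<n}"
    by (auto simp: subset_iff less_Suc_eq)
  then show ?thesis
    unfolding std_mon_def by (auto simp: lookup_add_single assms less_Suc_eq)
qed

lemma lookup_var_coeff_nonzero:
  assumes f: "f \<in> graded_piece d (Suc n) i" and nz: "lookup (var_coeff n k f) b \<noteq> 0"
  shows "lookup b n = 0 \<and> std_mon d n b \<and> mon_deg b = i - k \<and> k \<le> i \<and> k < d n"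
proof -
  have b: "lookup b n = 0" and "lookup f (b + single n k) \<noteq> 0"
    using nz by (simp_all add: lookup_var_coeff split: if_splits)
  then have "std_mon d (Suc n) (b + single n k)" "mon_deg (b + single n k) = i"
    using f by (auto simp: graded_piece_iff)
  then show ?thesis
    using std_mon_Suc_add_single[OF b] b by auto
qed

lemma var_coeff_eq_0_out_of_range:
  "f \<in> graded_piece d (Suc n) i \<Longrightarrow> \<not> (k \<le> i \<and> k < d n) \<Longrightarrow> var_coeff n k f = 0"
  using lookup_var_coeff_nonzero by (metis poly_mapping_eqI lookup_zero)

lemma var_coeff_graded_piece:
  assumes "f \<in> graded_piece d (Suc n) i"
  shows "var_coeff n k f \<in> graded_piece d n (i - k)"
  using lookup_var_coeff_nonzero[OF assms] by (auto simp: graded_piece_iff)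

lemma eq_0_if_var_coeff_eq_0:
  fixes f :: "'k::comm_ring_1 mpoly"
  assumes "\<And>k. var_coeff n k f = 0"
  shows "f = 0"
proof (rule poly_mapping_eqI)
  fix a :: "nat \<Rightarrow>\<^sub>0 nat"
  define b where "b = a - single n (lookup a n)"
  have "b + single n (lookup a n) = a" "lookup b n = 0"
    by (auto simp: b_def lookup_add lookup_minus lookup_single when_def intro: poly_mapping_eqI)
  then show "lookup f a = lookup 0 a"
    using assms[of "lookup a n"] by (metis lookup_var_coeff lookup_zero)
qed

text \<open>The identity \<open>x\<^sub>0 + \<dots> + x\<^sub>n = (x\<^sub>0 + \<dots> + x\<^sub>n\<^sub>-\<^sub>1) + x\<^sub>n\<close>, read off on the coefficients
  of the powers of \<open>x\<^sub>n\<close>.\<close>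

lemma lookup_mult_lin_form_Suc:
  fixes f :: "'k::comm_ring_1 mpoly"
  assumes b: "lookup b n = 0"
  shows "lookup (f * lin_form (Suc n)) (b + single n r)
    = lookup (var_coeff n r f * lin_form n) b + (if 0 < r then lookup (var_coeff n (r - 1) f) b else 0)"
proof -
  have other: "(if 0 < lookup (b + single n r) j then lookup f (b + single n r - single j 1) else 0)
      = (if 0 < lookup b j then lookup (var_coeff n r f) (b - single j 1) else 0)" if "j < n" for j
  proof -
    have "b + single n r - single j 1 = (b - single j 1) + single n r"
      using that by (intro poly_mapping_eqI) (auto simp: lookup_add lookup_minus lookup_single when_def)
    then show ?thesis
      using that b by (simp add: lookup_add_single lookup_var_coeff lookup_minus lookup_single)
  qed
  have last: "(if 0 < lookup (b + single n r) n then lookup f (b + single n r - single n 1) else 0)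
      = (if 0 < r then lookup (var_coeff n (r - 1) f) b else 0)"
  proof (cases "0 < r")
    case True
    then have "b + single n r - single n 1 = b + single n (r - 1)"
      by (intro poly_mapping_eqI) (auto simp: lookup_add lookup_minus lookup_single when_def)
    then show ?thesis
      using True b by (simp add: lookup_add_single lookup_var_coeff)
  qed (simp add: b lookup_add_single)
  show ?thesis
    unfolding lookup_mult_lin_form sum.lessThan_Suc last using other by simp
qed

lemma var_coeff_lin_mult:
  assumes f: "f \<in> graded_piece d (Suc n) i"
  shows "var_coeff n r (lin_mult d (Suc n) f) =
    (if r < d n then lin_mult d n (var_coeff n r f) + (if r = 0 then 0 else var_coeff n (r - 1) f) else 0)"
proof (rule poly_mapping_eqI)
  fix b
  show "lookup (var_coeff n r (lin_mult d (Suc n) f)) b = lookup (if r < d n then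
      lin_mult d n (var_coeff n r f) + (if r = 0 then 0 else var_coeff n (r - 1) f) else 0) b"
  proof (cases "lookup b n = 0")
    case True
    have "lookup (var_coeff n (r - 1) f) b = 0" if "\<not> std_mon d n b"
      using lookup_var_coeff_nonzero[OF f] that by blast
    then show ?thesis
      using True by (auto simp: lookup_var_coeff lin_mult_def lookup_mult_map lookup_add
          std_mon_Suc_add_single lookup_mult_lin_form_Suc)
  next
    case False
    then have "n \<in> keys b"
      by (simp add: in_keys_iff)
    then have "\<not> std_mon d n b"
      by (auto simp: std_mon_def)
    with False show ?thesis
      by (simp add: lookup_var_coeff lookup_lin_mult lookup_add)
  qed
qed

lemma var_coeff_funpow_lin_mult:
  assumes f: "f \<in> graded_piece d (Suc n) i"
  shows "(\<lambda>k. var_coeff n k ((lin_mult d (Suc n) ^^ m) f))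
    = (graded_operator.tensor_mult (lin_mult d n) (d n) ^^ m) (\<lambda>k. var_coeff n k f)"
proof (induction m)
  case (Suc m)
  have "(lin_mult d (Suc n) ^^ m) f \<in> graded_piece d (Suc n) (i + m)"
    by (rule funpow_lin_mult_graded_piece[OF f])
  then have "(\<lambda>k. var_coeff n k ((lin_mult d (Suc n) ^^ Suc m) f))
      = graded_operator.tensor_mult (lin_mult d n) (d n) (\<lambda>k. var_coeff n k ((lin_mult d (Suc n) ^^ m) f))"
    by (intro ext) (simp only: funpow.simps comp_apply var_coeff_lin_mult
        graded_operator.tensor_mult_def[OF graded_operator_lin_mult])
  then show ?case
    using Suc by simp
qed simp

lemma var_coeff_zero [simp]: "var_coeff n k 0 = 0"
  by (rule poly_mapping_eqI) (simp add: lookup_var_coeff)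

text \<open>Induction on the number of variables: writing \<open>A = A' \<otimes> k[x\<^sub>n]/(x\<^sub>n^d\<^sub>n)\<close>, the
  injectivity statement for \<open>A'\<close> is \<open>inj_mod\<close> for the zero submodule, and the tensor
  argument transfers it to \<open>A\<close>, whose socle degree is larger by \<open>d\<^sub>n - 1\<close>.\<close>

theorem funpow_lin_mult_inj_below_CHAR:
  fixes d :: "nat \<Rightarrow> nat" and f :: "'k::field mpoly"
  assumes char: "N < CHAR('k)"
  shows "\<forall>j<n. 0 < d j \<Longrightarrow> f \<in> graded_piece d n i \<Longrightarrow> 2 * i + m \<le> (\<Sum>j<n. d j - 1) \<Longrightarrow>
    i + m \<le> N \<Longrightarrow> (lin_mult d n ^^ m) f = 0 \<Longrightarrow> f = 0"
proof (induction n arbitrary: i m f)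
  case 0
  then show ?case
    by simp
next
  case (Suc n)
  interpret graded_operator "graded_piece d n" "lin_mult d n" "std_mons d n :: nat \<Rightarrow> 'k mpoly set"
    by (rule graded_operator_lin_mult)
  note f = Suc.prems(2)
  let ?W = "\<lambda>_::nat. {0::'k mpoly}"
  let ?g = "\<lambda>k. var_coeff n k f"
  have W: "graded_submodule ?W"
    by (simp add: graded_submodule_def subspace_mp_def)
  have inj: "inj_mod ?W (\<Sum>j<n. d j - 1) N"
    using Suc.IH Suc.prems(1) by (simp add: inj_mod_def)
  have g: "hom_tensor (d n) i ?g"
    using var_coeff_graded_piece[OF f] var_coeff_eq_0_out_of_range[OF f] by (simp add: hom_tensor_def)
  have D: "1 \<le> d n"
    using Suc.prems(1) by (simp add: Suc_le_eq)
  have "(tensor_mult (d n) ^^ m) ?g = (\<lambda>k. 0)"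
    using var_coeff_funpow_lin_mult[OF f, of m] Suc.prems(5) by simp
  then have "tensor_in ?W (i + m) ((tensor_mult (d n) ^^ m) ?g)"
    by (simp add: tensor_in_def)
  then have "tensor_in ?W i ?g"
    using Suc.prems(3,4) D
    by (intro tensor_in_if_funpow_tensor_mult_in[OF char D W inj g]) simp_all
  then have "var_coeff n k f = 0" for k
    using var_coeff_eq_0_out_of_range[OF f] by (cases "k \<le> i") (auto simp: tensor_in_def)
  then show ?case
    by (rule eq_0_if_var_coeff_eq_0)
qed

section \<open>Injectivity below an exponent \<open>d\<^sub>j\<close>\<close>

lemma keys_funpow_lin_mult_exponent_le:
  assumes "\<forall>a\<in>keys f. lookup a j \<le> K"
  shows "\<forall>b\<in>keys ((lin_mult d n ^^ m) f). lookup b j \<le> K + m"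
proof (induction m)
  case (Suc m)
  show ?case
  proof
    fix b assume "b \<in> keys ((lin_mult d n ^^ Suc m) f)"
    then obtain j' where "0 < lookup b j'" "b - single j' 1 \<in> keys ((lin_mult d n ^^ m) f)"
      by (auto simp: lookup_lin_mult in_keys_iff split: if_splits
          elim!: sum.not_neutral_contains_not_neutral)
    then have "lookup (b - single j' 1) j \<le> K + m"
      using Suc by blast
    then show "lookup b j \<le> K + Suc m"
      by (simp add: lookup_minus lookup_single when_def split: if_splits)
  qed
qed (use assms in simp)

text \<open>At a monomial of maximal \<open>x\<^sub>j\<close>-degree \<open>K + m\<close>, only the term \<open>x\<^sub>j^m\<close> of \<open>\<ell>^m\<close>
  contributes.\<close>

lemma lookup_funpow_lin_mult_top_exponent:
  assumes j: "j < n" and K: "\<forall>a\<in>keys f. lookup a j \<le> K"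
  shows "lookup b j = K + m \<Longrightarrow> std_mon d n b \<Longrightarrow>
    lookup ((lin_mult d n ^^ m) f) b = lookup f (b - single j m)"
proof (induction m arbitrary: b)
  case (Suc m)
  let ?h = "(lin_mult d n ^^ m) f"
  have other: "(if 0 < lookup b j' then lookup ?h (b - single j' 1) else 0) = 0" if "j' \<noteq> j" for j'
  proof -
    have "lookup (b - single j' 1) j = K + Suc m"
      using that Suc.prems(1) by (simp add: lookup_minus lookup_single when_def)
    then have "b - single j' 1 \<notin> keys ?h"
      using keys_funpow_lin_mult_exponent_le[OF K, where d = d and n = n and m = m] by fastforce
    then show ?thesis
      by (simp add: in_keys_iff)
  qed
  have "(\<Sum>j'\<in>{..<n} - {j}. if 0 < lookup b j' then lookup ?h (b - single j' 1) else 0) = 0"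
    by (intro sum.neutral ballI) (use other in blast)
  have "lookup ((lin_mult d n ^^ Suc m) f) b
      = (\<Sum>j'<n. if 0 < lookup b j' then lookup ?h (b - single j' 1) else 0)"
    using Suc.prems by (simp add: lookup_lin_mult)
  also have "\<dots> = lookup ?h (b - single j 1)"
    using j Suc.prems(1) by (simp add: sum.remove[of _ j] \<open>(\<Sum>j'\<in>_. _) = 0\<close>)
  also have "\<dots> = lookup f (b - single j 1 - single j m)"
    using Suc.IH[of "b - single j 1"] Suc.prems std_mon_diff by (simp add: lookup_minus)
  also have "b - single j 1 - single j m = b - single j (Suc m)"
    by (rule poly_mapping_eqI) (simp add: lookup_minus lookup_single when_def)
  finally show ?case .
qed simp

theorem funpow_lin_mult_inj_below_exponent:
  fixes f :: "'k::comm_ring_1 mpoly"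
  assumes j: "j < n" and f: "f \<in> graded_piece d n i" and im: "i + m < d j"
    and zero: "(lin_mult d n ^^ m) f = 0"
  shows "f = 0"
proof (rule ccontr)
  assume "f \<noteq> 0"
  define K where "K = Max ((\<lambda>a. lookup a j) ` keys f)"
  have K: "\<forall>a\<in>keys f. lookup a j \<le> K"
    by (simp add: K_def)
  have "K \<in> (\<lambda>a. lookup a j) ` keys f"
    unfolding K_def using \<open>f \<noteq> 0\<close> by (intro Max_in) auto
  then obtain a where a: "a \<in> keys f" "lookup a j = K"
    by blast
  then have std_a: "std_mon d n a" and "K \<le> i"
    using f lookup_le_mon_deg[of a j] by (auto simp: graded_piece_def)
  let ?b = "a + single j m"
  have "keys ?b \<subseteq> {..<n}"
    using keys_add[of a "single j m"] std_a j by (auto simp: std_mon_def split: if_splits)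
  then have "std_mon d n ?b"
    using std_a \<open>K \<le> i\<close> im a by (auto simp: std_mon_def lookup_add lookup_single when_def)
  then have "lookup ((lin_mult d n ^^ m) f) ?b = lookup f a"
    using lookup_funpow_lin_mult_top_exponent[OF j K, of ?b] a by (simp add: lookup_add)
  then show False
    using zero a by (simp add: in_keys_iff)
qed

section \<open>Surjectivity by duality\<close>

definition compl_mon :: "(nat \<Rightarrow> nat) \<Rightarrow> nat \<Rightarrow> (nat \<Rightarrow>\<^sub>0 nat) \<Rightarrow> (nat \<Rightarrow>\<^sub>0 nat)" where
  "compl_mon d n a = Abs_poly_mapping (\<lambda>j. if j < n then d j - 1 - lookup a j else 0)"

lemma lookup_compl_mon: "lookup (compl_mon d n a) j = (if j < n then d j - 1 - lookup a j else 0)"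
proof -
  have "finite {j. (if j < n then d j - 1 - lookup a j else 0) \<noteq> 0}"
    by (rule finite_subset[of _ "{..<n}"]) auto
  then show ?thesis
    unfolding compl_mon_def by simp
qed

lemma std_mon_compl_mon: "\<forall>j<n. 0 < d j \<Longrightarrow> std_mon d n (compl_mon d n a)"
  unfolding std_mon_def by (auto simp: lookup_compl_mon in_keys_iff split: if_splits)

lemma compl_mon_compl_mon: "std_mon d n a \<Longrightarrow> compl_mon d n (compl_mon d n a) = a"
  by (rule poly_mapping_eqI) (auto simp: lookup_compl_mon std_mon_def in_keys_iff)

lemma inj_on_compl_mon: "inj_on (compl_mon d n) {a. std_mon d n a}"
  by (rule inj_onI) (metis compl_mon_compl_mon mem_Collect_eq)

lemma mon_deg_compl_mon:
  assumes a: "std_mon d n a"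
  shows "mon_deg (compl_mon d n a) = (\<Sum>j<n. d j - 1) - mon_deg a"
proof -
  have "mon_deg (compl_mon d n a) = (\<Sum>j<n. (d j - 1) - lookup a j)"
    by (subst mon_deg_eq_sum[of "{..<n}"]) (auto simp: lookup_compl_mon in_keys_iff split: if_splits)
  also have "\<dots> = (\<Sum>j<n. d j - 1) - (\<Sum>j<n. lookup a j)"
    by (rule sum_subtractf_nat) (use a in \<open>auto simp: std_mon_def\<close>)
  finally show ?thesis
    using mon_deg_std_mon[OF a] by simp
qed

lemma mon_dvd_compl_mon_iff:
  assumes a: "std_mon d n a" and b: "std_mon d n b"
  shows "mon_dvd (compl_mon d n b) (compl_mon d n a) \<longleftrightarrow> mon_dvd a b"
proof -
  have "lookup (compl_mon d n b) j \<le> lookup (compl_mon d n a) j \<longleftrightarrow> lookup a j \<le> lookup b j" for j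
  proof (cases "j < n")
    case True
    then show ?thesis
      using std_mon_lookup_le[OF a True] std_mon_lookup_le[OF b True] by (simp add: lookup_compl_mon) linarith
  qed (use std_mon_lookup_eq_0[OF a] std_mon_lookup_eq_0[OF b] in \<open>simp add: lookup_compl_mon not_less\<close>)
  then show ?thesis
    unfolding mon_dvd_def by blast
qed

lemma compl_mon_diff:
  assumes a: "std_mon d n a" and b: "std_mon d n b" and ab: "mon_dvd a b"
  shows "compl_mon d n a - compl_mon d n b = b - a"
proof (rule poly_mapping_eqI)
  fix j
  show "lookup (compl_mon d n a - compl_mon d n b) j = lookup (b - a) j"
  proof (cases "j < n")
    case True
    then show ?thesis
      using std_mon_lookup_le[OF a True] std_mon_lookup_le[OF b True] ab
      by (simp add: lookup_compl_mon lookup_minus mon_dvd_def)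
  qed (use std_mon_lookup_eq_0[OF a] std_mon_lookup_eq_0[OF b] in \<open>simp add: lookup_compl_mon lookup_minus not_less\<close>)
qed

text \<open>Multiplication by \<open>\<ell>^m\<close> is self-adjoint for the pairing \<open>\<langle>x^a, x^b\<rangle> = [a + b = socle]\<close>.\<close>

lemma lookup_mult_map_compl_mon:
  assumes d: "\<forall>j<n. 0 < d j" and a: "std_mon d n a" and b: "std_mon d n b"
  shows "lookup (mult_map d n m (single (compl_mon d n b) c)) (compl_mon d n a)
    = lookup (mult_map d n m (single a c)) b"
  using mon_dvd_compl_mon_iff[OF a b] compl_mon_diff[OF a b] std_mon_compl_mon[OF d] a b
  by (simp add: lookup_mult_map lookup_single_mult)

lemma subspace_mp_eliminate:
  fixes V :: "'k::field mpoly set"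
  assumes V: "subspace_mp V" and w0: "w0 \<in> V"
  shows "subspace_mp ((\<lambda>v. v - smult_mp (lookup v b) w0) ` V)"
    and "(\<lambda>v. v - smult_mp (lookup v b) w0) ` V \<subseteq> V"
proof -
  let ?e = "\<lambda>v. v - smult_mp (lookup v b) w0"
  show "?e ` V \<subseteq> V"
    using subspace_mp_diff[OF V] subspace_mp_smult[OF V w0] by blast
  show "subspace_mp (?e ` V)"
    unfolding subspace_mp_def
  proof (intro conjI ballI allI)
    show "0 \<in> ?e ` V"
      using subspace_mp_zero[OF V] by (intro image_eqI[of _ _ 0]) auto
  next
    fix x y assume "x \<in> ?e ` V" "y \<in> ?e ` V"
    then obtain u1 u2 where "u1 \<in> V" "u2 \<in> V" "x = ?e u1" "y = ?e u2"
      by auto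
    then show "x + y \<in> ?e ` V"
      by (intro image_eqI[of _ _ "u1 + u2"]) (auto simp: lookup_add smult_mp_add_left subspace_mp_add[OF V])
  next
    fix c x assume "x \<in> ?e ` V"
    then obtain u where "u \<in> V" "x = ?e u"
      by auto
    then show "smult_mp c x \<in> ?e ` V"
      by (intro image_eqI[of _ _ "smult_mp c u"]) (auto simp: smult_mp_diff subspace_mp_smult[OF V])
  qed
qed

lemma keys_eliminate_subset:
  assumes "keys v \<subseteq> insert b S" "keys w0 \<subseteq> insert b S" "lookup w0 b = 1"
  shows "keys (v - smult_mp (lookup v b) w0) \<subseteq> S"
proof
  fix x assume "x \<in> keys (v - smult_mp (lookup v b) w0)"
  then have "x \<noteq> b" "x \<in> keys v \<or> x \<in> keys w0"
    using assms(3) by (auto simp: in_keys_iff lookup_minus)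
  then show "x \<in> S"
    using assms(1,2) by blast
qed

lemma single_notin_eliminate:
  fixes V :: "'k::field mpoly set"
  assumes V: "subspace_mp V" and w0: "w0 \<in> V" "lookup w0 b = 1"
    and keys_V: "\<forall>v\<in>V. keys v \<subseteq> insert b S" and b0: "b0 \<in> insert b S" "single b0 1 \<notin> V"
  shows "\<exists>b0'\<in>S. single b0' 1 \<notin> (\<lambda>v. v - smult_mp (lookup v b) w0) ` V"
proof (rule ccontr)
  let ?e = "\<lambda>v. v - smult_mp (lookup v b) w0"
  assume all: "\<not> (\<exists>b0'\<in>S. single b0' 1 \<notin> ?e ` V)"
  have "keys (?e (single b0 1)) \<subseteq> S"
    using b0(1) keys_V w0 by (intro keys_eliminate_subset) auto
  then have "?e (single b0 1) \<in> ?e ` V"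
    by (rule mem_subspace_mp_if_monomials[OF subspace_mp_eliminate(1)[OF V w0(1)], rotated])
      (use all in blast)
  then have "?e (single b0 1) \<in> V"
    using subspace_mp_eliminate(2)[OF V w0(1)] by blast
  then have "?e (single b0 1) + smult_mp (lookup (single b0 1) b) w0 \<in> V"
    by (rule subspace_mp_add[OF V]) (rule subspace_mp_smult[OF V w0(1)])
  then show False
    using b0(2) by simp
qed

lemma annihilator_insert:
  fixes \<phi> :: "(nat \<Rightarrow>\<^sub>0 nat) \<Rightarrow> 'k::comm_ring_1"
  assumes "finite S" "b \<notin> S" "\<exists>x\<in>S. \<phi> x \<noteq> 0"
    and \<phi>: "\<forall>v\<in>V. (\<Sum>x\<in>S. \<phi> x * lookup (v - smult_mp (lookup v b) w0) x) = 0"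
  shows "\<exists>\<psi>. (\<exists>x\<in>insert b S. \<psi> x \<noteq> 0) \<and> (\<forall>v\<in>V. (\<Sum>x\<in>insert b S. \<psi> x * lookup v x) = 0)"
proof (intro exI conjI ballI)
  define \<psi> where "\<psi> x = (if x = b then - (\<Sum>b'\<in>S. \<phi> b' * lookup w0 b') else \<phi> x)" for x
  show "\<exists>x\<in>insert b S. \<psi> x \<noteq> 0"
    using assms(2,3) by (metis \<psi>_def insertCI)
  fix v assume "v \<in> V"
  have "(\<Sum>x\<in>insert b S. \<psi> x * lookup v x) = \<psi> b * lookup v b + (\<Sum>x\<in>S. \<phi> x * lookup v x)"
    using assms(1,2) by (auto simp: \<psi>_def intro!: sum.cong)
  also have "\<dots> = (\<Sum>x\<in>S. \<phi> x * lookup (v - smult_mp (lookup v b) w0) x)"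
    by (simp add: \<psi>_def lookup_minus algebra_simps sum_subtractf sum_distrib_left sum_distrib_right)
  also have "\<dots> = 0"
    using \<phi> \<open>v \<in> V\<close> by blast
  finally show "(\<Sum>x\<in>insert b S. \<psi> x * lookup v x) = 0" .
qed

text \<open>Gaussian elimination, one monomial of \<open>S\<close> at a time.\<close>

lemma exists_annihilator:
  fixes V :: "'k::field mpoly set"
  assumes "finite S"
  shows "subspace_mp V \<Longrightarrow> \<forall>v\<in>V. keys v \<subseteq> S \<Longrightarrow> b0 \<in> S \<Longrightarrow> single b0 1 \<notin> V \<Longrightarrow>
    \<exists>\<phi>. (\<exists>b\<in>S. \<phi> b \<noteq> 0) \<and> (\<forall>v\<in>V. (\<Sum>b\<in>S. \<phi> b * lookup v b) = 0)"
  using assms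
proof (induction S arbitrary: V b0 rule: finite_induct)
  case empty
  then show ?case
    by simp
next
  case (insert b S)
  note V = insert.prems(1) and keys_V = insert.prems(2)
  show ?case
  proof (cases "\<forall>v\<in>V. lookup v b = 0")
    case True
    then show ?thesis
      using insert.hyps keys_V
      by (intro exI[of _ "\<lambda>x. if x = b then 1 else 0"]) (auto intro!: sum.neutral)
  next
    case False
    then obtain v0 where v0: "v0 \<in> V" "lookup v0 b \<noteq> 0"
      by auto
    define w0 where "w0 = smult_mp (inverse (lookup v0 b)) v0"
    have w0: "w0 \<in> V" "lookup w0 b = 1"
      using v0 subspace_mp_smult[OF V] by (simp_all add: w0_def)
    let ?e = "\<lambda>v. v - smult_mp (lookup v b) w0"
    obtain b0' where "b0' \<in> S" "single b0' 1 \<notin> ?e ` V"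
      using single_notin_eliminate[OF V w0 keys_V insert.prems(3,4)] by blast
    moreover have "\<forall>v\<in>?e ` V. keys v \<subseteq> S"
      using keys_V w0 keys_eliminate_subset[of _ b S w0] by blast
    ultimately obtain \<phi> where "\<exists>b\<in>S. \<phi> b \<noteq> 0" "\<forall>v\<in>?e ` V. (\<Sum>b\<in>S. \<phi> b * lookup v b) = 0"
      using insert.IH subspace_mp_eliminate(1)[OF V w0(1)] by blast
    then show ?thesis
      using insert.hyps by (intro annihilator_insert) auto
  qed
qed

lemma mult_map_sum: "mult_map d n m (sum f A) = (\<Sum>x\<in>A. mult_map d n m (f x))"
  by (induction A rule: infinite_finite_induct) (simp_all add: mult_map_add)

lemma subspace_mp_image_mult_map:
  "subspace_mp (mult_map d n m ` (graded_piece d n i :: 'k::comm_ring_1 mpoly set))"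
  unfolding subspace_mp_def
proof (intro conjI ballI allI)
  show "0 \<in> mult_map d n m ` graded_piece d n i"
    by (rule image_eqI[of _ _ 0]) simp_all
next
  fix x y :: "'k mpoly"
  assume "x \<in> mult_map d n m ` graded_piece d n i" "y \<in> mult_map d n m ` graded_piece d n i"
  then show "x + y \<in> mult_map d n m ` graded_piece d n i"
    by (auto simp flip: mult_map_add intro: graded_piece_add)
next
  fix c and x :: "'k mpoly"
  assume "x \<in> mult_map d n m ` graded_piece d n i"
  then show "smult_mp c x \<in> mult_map d n m ` graded_piece d n i"
    by (auto simp flip: mult_map_smult_mp intro: graded_piece_smult_mp)
qed

lemma lookup_sum_single_compl_mon:
  assumes "finite S" "S \<subseteq> {a. std_mon d n a}" "b \<in> S"
  shows "lookup (\<Sum>b'\<in>S. single (compl_mon d n b') (\<phi> b')) (compl_mon d n b) = \<phi> b"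
proof -
  have "compl_mon d n b' = compl_mon d n b \<longleftrightarrow> b' = b" if "b' \<in> S" for b'
    using inj_on_compl_mon assms that by (meson inj_on_eq_iff subsetD)
  then show ?thesis
    using assms by (simp add: lookup_sum lookup_single when_def)
qed

lemma lookup_mult_map_dual:
  assumes d: "\<forall>j<n. 0 < d j" and S: "S \<subseteq> {a. std_mon d n a}" and a: "std_mon d n a"
  shows "lookup (mult_map d n m (\<Sum>b\<in>S. single (compl_mon d n b) (\<phi> b))) (compl_mon d n a)
    = (\<Sum>b\<in>S. \<phi> b * lookup (mult_map d n m (single a 1)) b)"
proof -
  have "lookup (mult_map d n m (single (compl_mon d n b) (\<phi> b))) (compl_mon d n a)
      = \<phi> b * lookup (mult_map d n m (single a 1)) b" if "b \<in> S" for b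
    using lookup_mult_map_compl_mon[OF d a, of b m "\<phi> b"] S that
      single_eq_smult_mp[of a "\<phi> b"] by (auto simp: mult_map_smult_mp)
  then show ?thesis
    by (simp add: mult_map_sum lookup_sum)
qed

lemma sum_single_compl_mon_graded_piece:
  assumes d: "\<forall>j<n. 0 < d j" and "finite S" and S: "\<And>b. b \<in> S \<Longrightarrow> std_mon d n b \<and> mon_deg b = e"
  shows "(\<Sum>b\<in>S. single (compl_mon d n b) (\<phi> b)) \<in> graded_piece d n ((\<Sum>j<n. d j - 1) - e)"
  using assms(2) S std_mon_compl_mon[OF d] mon_deg_compl_mon
  by (intro subspace_mp_sum[OF subspace_mp_graded_piece] single_in_graded_piece) auto

lemma mult_map_dual_eq_0:
  fixes d :: "nat \<Rightarrow> nat" and n m i :: nat and \<phi> :: "(nat \<Rightarrow>\<^sub>0 nat) \<Rightarrow> 'k::comm_ring_1"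
  defines "S \<equiv> {b. std_mon d n b \<and> mon_deg b = i + m}" and "t \<equiv> \<Sum>j<n. d j - 1"
  assumes d: "\<forall>j<n. 0 < d j" and im: "i + m \<le> t"
    and \<phi>: "\<forall>v\<in>mult_map d n m ` graded_piece d n i. (\<Sum>b\<in>S. \<phi> b * lookup v b) = 0"
  shows "mult_map d n m (\<Sum>b\<in>S. single (compl_mon d n b) (\<phi> b)) = 0"
proof (rule poly_mapping_eqI, rule ccontr)
  let ?g = "\<Sum>b\<in>S. single (compl_mon d n b) (\<phi> b)"
  fix c assume nz: "lookup (mult_map d n m ?g) c \<noteq> lookup 0 c"
  have "?g \<in> graded_piece d n (t - (i + m))"
    unfolding t_def using d finite_std_mon[of d n]
    by (intro sum_single_compl_mon_graded_piece) (auto simp: S_def elim: finite_subset[rotated])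
  then have "mult_map d n m ?g \<in> graded_piece d n (t - (i + m) + m)"
    by (rule mult_map_graded_piece)
  then have c: "std_mon d n c" "mon_deg c = t - i"
    using nz im by (auto simp: graded_piece_iff)
  define a where "a = compl_mon d n c"
  have a: "std_mon d n a" "mon_deg a = i" "compl_mon d n a = c"
    using std_mon_compl_mon[OF d] mon_deg_compl_mon[OF c(1)] compl_mon_compl_mon[OF c(1)]
      mon_deg_std_mon_le[OF c(1)] c(2) im
    by (auto simp: a_def t_def)
  have "lookup (mult_map d n m ?g) c = (\<Sum>b\<in>S. \<phi> b * lookup (mult_map d n m (single a 1)) b)"
    unfolding a(3)[symmetric] by (rule lookup_mult_map_dual[OF d _ a(1)]) (auto simp: S_def)
  also have "\<dots> = 0"
    using \<phi> imageI[OF single_in_graded_piece[OF a(1,2)], of "mult_map d n m"] by blast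
  finally show False
    using nz by simp
qed

theorem mult_map_surj_if_dual_inj:
  fixes d :: "nat \<Rightarrow> nat" and n m i :: nat
  defines "t \<equiv> \<Sum>j<n. d j - 1"
  assumes d: "\<forall>j<n. 0 < d j"
    and inj: "i + m \<le> t \<Longrightarrow>
      \<forall>g\<in>graded_piece d n (t - (i + m)). mult_map d n m g = (0::'k::field mpoly) \<longrightarrow> g = 0"
  shows "mult_map d n m ` (graded_piece d n i :: 'k mpoly set) = graded_piece d n (i + m)"
proof
  show "mult_map d n m ` (graded_piece d n i :: 'k mpoly set) \<subseteq> graded_piece d n (i + m)"
    using mult_map_graded_piece by blast
  let ?V = "mult_map d n m ` (graded_piece d n i :: 'k mpoly set)"
  let ?S = "{b. std_mon d n b \<and> mon_deg b = i + m}"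
  show "graded_piece d n (i + m) \<subseteq> ?V"
  proof (rule ccontr)
    assume "\<not> graded_piece d n (i + m) \<subseteq> ?V"
    then have "\<not> std_mons d n (i + m) \<subseteq> ?V"
      using graded_piece_subset_subspace_mp[OF subspace_mp_image_mult_map] by blast
    then obtain b0 where b0: "b0 \<in> ?S" "single b0 1 \<notin> ?V"
      by (auto simp: std_mons_def)
    have fin: "finite ?S"
      by (rule finite_subset[OF _ finite_std_mon]) auto
    moreover have "\<forall>v\<in>?V. keys v \<subseteq> ?S"
      using mult_map_graded_piece keys_graded_piece by blast
    ultimately have "\<exists>\<phi>. (\<exists>b\<in>?S. \<phi> b \<noteq> 0) \<and> (\<forall>v\<in>?V. (\<Sum>b\<in>?S. \<phi> b * lookup v b) = 0)"
      by (rule exists_annihilator[OF _ subspace_mp_image_mult_map _ b0])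
    then obtain \<phi> b1 where \<phi>: "b1 \<in> ?S" "\<phi> b1 \<noteq> 0" "\<forall>v\<in>?V. (\<Sum>b\<in>?S. \<phi> b * lookup v b) = 0"
      by blast
    let ?g = "\<Sum>b\<in>?S. single (compl_mon d n b) (\<phi> b)"
    have im: "i + m \<le> t"
      using \<phi>(1) mon_deg_std_mon_le[of d n b1] by (simp add: t_def)
    have "?g \<in> graded_piece d n (t - (i + m))"
      unfolding t_def by (rule sum_single_compl_mon_graded_piece[OF d fin]) simp
    moreover have "lookup ?g (compl_mon d n b1) = \<phi> b1"
      using fin \<phi>(1) by (intro lookup_sum_single_compl_mon) auto
    then have "?g \<noteq> 0"
      using \<phi>(2) by auto
    moreover have "mult_map d n m ?g = 0"
      using d im \<phi>(3) unfolding t_def by (rule mult_map_dual_eq_0)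
    ultimately show False
      using inj[OF im] by blast
  qed
qed

lemma inj_on_mult_map_if_kernel_trivial:
  assumes "\<And>f. f \<in> graded_piece d n i \<Longrightarrow> mult_map d n m f = 0 \<Longrightarrow> f = (0::'k::comm_ring_1 mpoly)"
  shows "inj_on (mult_map d n m) (graded_piece d n i :: 'k mpoly set)"
proof (rule inj_onI)
  fix f g :: "'k mpoly"
  assume "f \<in> graded_piece d n i" "g \<in> graded_piece d n i" "mult_map d n m f = mult_map d n m g"
  then show "f = g"
    using assms[of "f - g"] by (simp add: mult_map_diff graded_piece_diff)
qed

lemma mult_map_eq_0_imp_eq_0:
  fixes f :: "'k::field mpoly"
  assumes d: "\<forall>j<n. 0 < d j" and i: "2 * i + m \<le> (\<Sum>j<n. d j - 1)"
    and bound: "i + m < CHAR('k) \<or> (\<exists>j<n. i + m < d j)"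
    and f: "f \<in> graded_piece d n i" and zero: "mult_map d n m f = 0"
  shows "f = 0"
proof -
  have "(lin_mult d n ^^ m) f = 0"
    using zero mult_map_eq_funpow[OF f] by simp
  then show ?thesis
    using bound funpow_lin_mult_inj_below_CHAR[of "i + m" n d f i m] d i f
      funpow_lin_mult_inj_below_exponent[OF _ f] by auto
qed

theorem theorem2p7:
  fixes p n m :: nat and d :: "nat \<Rightarrow> nat"
  assumes "CHAR('k::field) = p" and "p > 0"
    and "\<forall>j<n. d j > 0"
    and "(\<Sum>j<n. d j - 1) + m < 2 * Max (insert p (d ` {..<n}))"
  shows "\<forall>i. maximal_rank (mult_map d n m :: 'k mpoly \<Rightarrow> 'k mpoly)
                 (graded_piece d n i) (graded_piece d n (i + m))"
proof
  fix i
  let ?t = "\<Sum>j<n. d j - 1"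
  have "Max (insert p (d ` {..<n})) \<in> insert p (d ` {..<n})"
    by (rule Max_in) auto
  then have "i' + m < CHAR('k) \<or> (\<exists>j<n. i' + m < d j)" if "2 * i' + m \<le> ?t" for i'
    using that assms(1,4) by auto
  then have kernel: "f = 0"
    if "2 * i' + m \<le> ?t" "f \<in> graded_piece d n i'" "mult_map d n m f = 0" for i' and f :: "'k mpoly"
    using mult_map_eq_0_imp_eq_0[OF assms(3)] that by blast
  show "maximal_rank (mult_map d n m :: 'k mpoly \<Rightarrow> 'k mpoly) (graded_piece d n i) (graded_piece d n (i + m))"
  proof (cases "2 * i + m \<le> ?t")
    case True
    then show ?thesis
      unfolding maximal_rank_def using kernel by (blast intro: inj_on_mult_map_if_kernel_trivial)
  next
    case False
    have "mult_map d n m ` (graded_piece d n i :: 'k mpoly set) = graded_piece d n (i + m)"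
    proof (rule mult_map_surj_if_dual_inj[OF assms(3)])
      assume "i + m \<le> ?t"
      with False have "2 * (?t - (i + m)) + m \<le> ?t"
        by linarith
      then show "\<forall>g\<in>graded_piece d n (?t - (i + m)). mult_map d n m g = (0::'k mpoly) \<longrightarrow> g = 0"
        using kernel by blast
    qed
    then show ?thesis
      by (simp add: maximal_rank_def)
  qed
qed

end
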